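(* Define $s(n)$ by $$\sum_{n=0}^{\infty}s(n)q^n=\sum_{n=0}^{\infty}\frac{(-1;q^2)_nq^{n(n+1)}}{(q;q)_{2n}}=\frac{(-q^2;q^2)_\infty}{(q^2;q^2)_\infty}(q^6,-q^3,-q^3;q^6)_\infty.$$ Then for all integers $\alpha\ge0$ and all $n\ge0$: (i) for every prime $p\ge5$ with $\left(\frac{-1}{p}\right)=-1$ and $1\le j\le p-1$, $$\sum_{n\ge0}s\!\left(24p^{2\alpha}n+5p^{2\alpha}\right)q^n\equiv4\ell_1\ell_4\pmod8,\qquad s\!\left(24p^{2\alpha+2}n+24p^{2\alpha+1}j+5p^{2\alpha+2}\right)\equiv0\pmod8;$$ (ii) for every prime $p\ge5$ with $\left(\frac{-2}{p}\right)=-1$ and $1\le j\le p-1$, $$\sum_{n\ge0}s\!\left(24p^{2\alpha}n+11p^{2\alpha}\right)q^n\equiv4\ell_2\psi(q^3)\pmod8,\qquad s\!\left(24p^{2\alpha+2}n+24p^{2\alpha+1}j+11p^{2\alpha+2}\right)\equiv0\pmod8;$$ (iii) for every prime $p\ge5$ with $\left(\frac{-6}{p}\right)=-1$ and $1\le j\le p-1$, $$\sum_{n\ge0}s\!\left(24p^{2\alpha}n+7p^{2\alpha}\right)q^n\equiv8\ell_1\psi(q^2)\pmod{16},\qquad s\!\left(24p^{2\alpha+2}n+24p^{2\alpha+1}j+7p^{2\alpha+2}\right)\equiv0\pmod{16};$$ (iv) for every prime $p\ge5$ with $\left(\frac{-18}{p}\right)=-1$ and $1\le j\le p-1$, $$\sum_{n\ge0}s\!\left(24p^{2\alpha}n+19p^{2\alpha}\right)q^n\equiv8\ell_1\psi(q^6)\pmod{16},\qquad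 s\!\left(24p^{2\alpha+2}n+24p^{2\alpha+1}j+19p^{2\alpha+2}\right)\equiv0\pmod{16}.$$
   Context: $(A;q)_0=1$, $(A;q)_n=\prod_{j=0}^{n-1}(1-Aq^j)$, $(A;q)_\infty=\prod_{j\ge0}(1-Aq^j)$, $(A_1,\dots,A_r;q)_\infty=\prod_i(A_i;q)_\infty$, and $\ell_n=(q^n;q^n)_\infty$. $\psi(q)=\sum_{m\ge0}q^{m(m+1)/2}=\ell_2^2/\ell_1$. A congruence between power series modulo $M$ means coefficientwise congruence modulo $M$. $\left(\frac{\cdot}{p}\right)$ is the Legendre symbol. *)

theory Defs
  imports "HOL-Computational_Algebra.Formal_Power_Series" "HOL-Number_Theory.Number_Theory"
begin

text \<open>Infinite product of integer power series whose j-th factor is 1 + O(q^(j+1)):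
  the n-th coefficient only depends on the factors 0..n.\<close>
definition fps_prodinf :: "(nat \<Rightarrow> int fps) \<Rightarrow> int fps" where
  "fps_prodinf F = Abs_fps (\<lambda>n. fps_nth (\<Prod>j<Suc n. F j) n)"

text \<open>1/(1 - q^k) = sum over m of q^(k m), for k \<ge> 1.\<close>
definition geom_inv :: "nat \<Rightarrow> int fps" where
  "geom_inv k = Abs_fps (\<lambda>n. if k dvd n then 1 else 0)"

text \<open>ell k = (q^k;q^k)_infinity, for k \<ge> 1.\<close>
definition ell :: "nat \<Rightarrow> int fps" where
  "ell k = fps_prodinf (\<lambda>j. 1 - fps_X ^ (k * (j + 1)))"

text \<open>psi(q^m) = sum over i of q^(m i(i+1)/2).\<close>
definition psi :: "nat \<Rightarrow> int fps" where
  "psi m = Abs_fps (\<lambda>n. if (\<exists>i::nat. n = m * (i * (i + 1) div 2)) then 1 else 0)"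

definition s_gf :: "int fps" where
  "s_gf = fps_prodinf (\<lambda>j. (1 + fps_X ^ (2 * j + 2)) * geom_inv (2 * j + 2)
            * (1 - fps_X ^ (6 * j + 6)) * (1 + fps_X ^ (6 * j + 3)) ^ 2)"

definition s :: "nat \<Rightarrow> int" where
  "s n = fps_nth s_gf n"

end

(*
  Jacobi's triple product identity, derived from Rothe's q-binomial theorem by X-adic limits,
  gives s_gf = phi(q^3) / phi(-q^2) with phi(q) = 1 + 2 sum_(m>0) q^(m^2). Inverting
  phi(-q^2) modulo 16 shows, for N = 5, 11 (mod 24), that s(N) = 4 r(3,2;N) (mod 8), and for
  N = 7, 19 (mod 24), that s(N) = 8 r(3,4;N) (mod 16), where r(a,b;N) is the number of
  x, y >= 0 with a x^2 + b y^2 = N.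

  Modulo 2, Euler's pentagonal theorem, psi = ell_1^3 and ell_k^2 = ell_(2k) turn the eta
  products involved into products of series supported on squares in residue classes
  mod 24. Hence r(3,2;N) and r(3,4;N) have the parity of r(1,4;N), r(2,9;N), r(1,6;N),
  r(1,18;N) in the respective classes, and likewise the n-th coefficients of 4 ell_1 ell_4,
  4 ell_2 psi(q^3), 8 ell_1 psi(q^2), 8 ell_1 psi(q^6) are congruent modulo 8 or 16 to
  4 or 8 times these counts at N = 24 n + 5, 11, 7, 19.

  Finally, let -D = -1, -2, -6, -18 be the discriminant -4ab of a x^2 + b y^2 up to a square
  factor. If -D is a quadratic non-residue mod p, then p | a x^2 + b y^2 forces p | x and
  p | y. Hence r(a,b;p^2 N) = r(a,b;N), and r(a,b;p M) = 0 when p does not divide M.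
*)

theory Submission
  imports Defs
begin

unbundle fps_syntax

abbreviation X :: "int fps" where "X \<equiv> fps_X"

section \<open>Truncated equality, X-adic limits and congruences of power series\<close>

definition eq_below :: "nat \<Rightarrow> int fps \<Rightarrow> int fps \<Rightarrow> bool" where
  "eq_below d f g \<longleftrightarrow> (\<exists>h. f = g + X^d * h)"

lemma eq_below_iff: "eq_below d f g \<longleftrightarrow> (\<forall>i<d. f $ i = g $ i)"
proof
  assume "eq_below d f g"
  then obtain h where "f = g + X^d * h" unfolding eq_below_def by blast
  then show "\<forall>i<d. f $ i = g $ i" by (simp add: fps_X_power_mult_nth)
next
  assume H: "\<forall>i<d. f $ i = g $ i"
  have "d \<le> subdegree (f - g) \<or> f - g = 0"
  proof (rule disjCI)
    assume "f - g \<noteq> 0"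
    then show "d \<le> subdegree (f - g)"
      using H nth_subdegree_nonzero[of "f-g"] by (metis fps_sub_nth diff_self not_le)
  qed
  then have "f - g = X^d * fps_shift d (f - g)"
  proof
    assume "d \<le> subdegree (f - g)"
    then show ?thesis using fps_shift_times_fps_X_power[of d "f-g"] by (simp add: mult.commute)
  qed simp
  then show "eq_below d f g" unfolding eq_below_def by (metis add.commute diff_add_cancel)
qed

lemma eq_below_refl[simp]: "eq_below d f f"
  unfolding eq_below_def by (rule exI[of _ 0]) simp

lemma eq_below_sym: "eq_below d f g \<Longrightarrow> eq_below d g f"
  by (simp add: eq_below_iff)

lemma eq_below_trans: "eq_below d f g \<Longrightarrow> eq_below d g h \<Longrightarrow> eq_below d f h"
  by (simp add: eq_below_iff)

lemma eq_below_mono: "eq_below d f g \<Longrightarrow> e \<le> d \<Longrightarrow> eq_below e f g"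
  by (simp add: eq_below_iff)

lemma eq_below_add: "eq_below d f g \<Longrightarrow> eq_below d f' g' \<Longrightarrow> eq_below d (f + f') (g + g')"
  by (simp add: eq_below_iff)

lemma eq_below_mult: "eq_below d f g \<Longrightarrow> eq_below d f' g' \<Longrightarrow> eq_below d (f * f') (g * g')"
proof -
  assume "eq_below d f g" "eq_below d f' g'"
  then obtain h h' where "f = g + X^d * h" "f' = g' + X^d * h'" unfolding eq_below_def by blast
  then have "f * f' = g * g' + X^d * (h * g' + g * h' + X^d * h * h')"
    by (simp add: algebra_simps power2_eq_square)
  then show ?thesis unfolding eq_below_def by blast
qed

lemma eq_below_prod: "(\<And>i. i \<in> A \<Longrightarrow> eq_below d (F i) (G i)) \<Longrightarrow> eq_below d (\<Prod>i\<in>A. F i) (\<Prod>i\<in>A. G i)"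
  by (induction A rule: infinite_finite_induct) (auto intro: eq_below_mult)

lemma eq_below_sum: "(\<And>i. i \<in> A \<Longrightarrow> eq_below d (F i) (G i)) \<Longrightarrow> eq_below d (\<Sum>i\<in>A. F i) (\<Sum>i\<in>A. G i)"
  by (induction A rule: infinite_finite_induct) (auto intro: eq_below_add)

lemma eq_below_X_power_mult: "eq_below (d + k) (X^k * f) (X^k * g)" if "eq_below d f g"
  using that by (auto simp: eq_below_iff fps_X_power_mult_nth)

definition fps_limit :: "int fps \<Rightarrow> (nat \<Rightarrow> int fps) \<Rightarrow> bool" where
  "fps_limit f P \<longleftrightarrow> (\<forall>d. \<exists>N. \<forall>n\<ge>N. eq_below d (P n) f)"

lemma fps_limit_mult: "fps_limit f P \<Longrightarrow> fps_limit g R \<Longrightarrow> fps_limit (f * g) (\<lambda>n. P n * R n)"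
  unfolding fps_limit_def
proof (intro allI)
  fix d assume A: "\<forall>d. \<exists>N. \<forall>n\<ge>N. eq_below d (P n) f" and B: "\<forall>d. \<exists>N. \<forall>n\<ge>N. eq_below d (R n) g"
  obtain N1 where 1: "\<forall>n\<ge>N1. eq_below d (P n) f" using A by blast
  obtain N2 where 2: "\<forall>n\<ge>N2. eq_below d (R n) g" using B by blast
  show "\<exists>N. \<forall>n\<ge>N. eq_below d (P n * R n) (f * g)"
    by (rule exI[of _ "max N1 N2"]) (simp add: 1 2 eq_below_mult)
qed

lemma fps_limit_unique: "fps_limit f P \<Longrightarrow> fps_limit g P \<Longrightarrow> f = g"
proof (rule fps_ext)
  fix i assume A: "fps_limit f P" "fps_limit g P"
  obtain N1 where 1: "\<forall>n\<ge>N1. eq_below (Suc i) (P n) f" using A(1) unfolding fps_limit_def by blast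
  obtain N2 where 2: "\<forall>n\<ge>N2. eq_below (Suc i) (P n) g" using A(2) unfolding fps_limit_def by blast
  have "eq_below (Suc i) f g" using 1 2
    by (meson max.cobounded1 max.cobounded2 eq_below_sym eq_below_trans)
  then show "f $ i = g $ i" by (simp add: eq_below_iff)
qed

lemma fps_limit_subseq: "fps_limit f P \<Longrightarrow> (\<And>n. n \<le> \<sigma> n) \<Longrightarrow> fps_limit f (\<lambda>n. P (\<sigma> n))"
  unfolding fps_limit_def
proof (intro allI)
  fix d assume A: "\<forall>d. \<exists>N. \<forall>n\<ge>N. eq_below d (P n) f" and B: "\<And>n. n \<le> \<sigma> n"
  obtain M where M: "\<forall>n\<ge>M. eq_below d (P n) f" using A by blast
  show "\<exists>N. \<forall>n\<ge>N. eq_below d (P (\<sigma> n)) f"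
    by (rule exI[of _ M]) (meson M B order_trans)
qed

lemma fps_limit_const: "fps_limit f (\<lambda>n. f)"
  unfolding fps_limit_def by auto

lemma fps_limit_eq_below: "fps_limit f P \<Longrightarrow> (\<And>d. \<exists>N. \<forall>n\<ge>N. eq_below d (R n) (P n)) \<Longrightarrow> fps_limit f R"
  unfolding fps_limit_def
proof (intro allI)
  fix d assume A: "\<forall>d. \<exists>N. \<forall>n\<ge>N. eq_below d (P n) f" and B: "\<And>d. \<exists>N. \<forall>n\<ge>N. eq_below d (R n) (P n)"
  obtain M where M: "\<forall>n\<ge>M. eq_below d (P n) f" using A by blast
  obtain K where K: "\<forall>n\<ge>K. eq_below d (R n) (P n)" using B by blast
  show "\<exists>N. \<forall>n\<ge>N. eq_below d (R n) f"
    by (rule exI[of _ "max M K"]) (metis M K max.bounded_iff eq_below_trans)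
qed

lemma fps_limit_prodinf:
  assumes "\<And>j. eq_below j (F j) 1"
  shows "fps_limit (fps_prodinf F) (\<lambda>n. \<Prod>j<n. F j)"
proof -
  have key: "eq_below (Suc i) (\<Prod>j<m. F j) (\<Prod>j<k. F j)" if "Suc i \<le> k" "k \<le> m" for i k m
  proof -
    have "(\<Prod>j<m. F j) = (\<Prod>j<k. F j) * (\<Prod>j\<in>{k..<m}. F j)"
      using that by (metis prod.atLeastLessThan_concat zero_le lessThan_atLeast0)
    moreover have "eq_below (Suc i) (\<Prod>j\<in>{k..<m}. F j) (\<Prod>j\<in>{k..<m}. 1)"
      by (rule eq_below_prod) (use assms that in \<open>auto intro: eq_below_mono\<close>)
    ultimately show ?thesis using eq_below_mult[OF eq_below_refl] by fastforce
  qed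
  show ?thesis unfolding fps_limit_def
  proof (intro allI)
    fix d
    show "\<exists>N. \<forall>n\<ge>N. eq_below d (\<Prod>j<n. F j) (fps_prodinf F)"
    proof (intro exI allI impI)
      fix n assume n: "n \<ge> d"
      show "eq_below d (\<Prod>j<n. F j) (fps_prodinf F)"
        unfolding eq_below_iff fps_prodinf_def
      proof (intro allI impI)
        fix i assume "i < d"
        have "eq_below (Suc i) (\<Prod>j<n. F j) (\<Prod>j<Suc i. F j)" using key[of i "Suc i" n] \<open>i<d\<close> n by linarith
        then show "(\<Prod>j<n. F j) $ i = Abs_fps (\<lambda>n. (\<Prod>j<Suc n. F j) $ n) $ i"
          by (simp add: eq_below_iff)
      qed
    qed
  qed
qed

definition fps_cong :: "int \<Rightarrow> int fps \<Rightarrow> int fps \<Rightarrow> bool" where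
  "fps_cong m f g \<longleftrightarrow> (\<exists>h. f = g + fps_const m * h)"

lemma fps_cong_iff: "fps_cong m f g \<longleftrightarrow> (\<forall>n. [f $ n = g $ n] (mod m))"
proof
  assume "fps_cong m f g"
  then obtain h where "f = g + fps_const m * h" unfolding fps_cong_def by blast
  then show "\<forall>n. [f $ n = g $ n] (mod m)"
    by (simp add: cong_iff_dvd_diff)
next
  assume H: "\<forall>n. [f $ n = g $ n] (mod m)"
  define h where "h = Abs_fps (\<lambda>n. (f $ n - g $ n) div m)"
  have "f = g + fps_const m * h"
  proof (rule fps_ext)
    fix n
    have "m dvd (f $ n - g $ n)" using H by (simp add: cong_iff_dvd_diff cong_sym_eq)
    then show "f $ n = (g + fps_const m * h) $ n" by (simp add: h_def)
  qed
  then show "fps_cong m f g" unfolding fps_cong_def by blast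
qed

lemma fps_cong_refl[simp]: "fps_cong m f f"
  unfolding fps_cong_def by (rule exI[of _ 0]) simp

lemma fps_cong_sym: "fps_cong m f g \<Longrightarrow> fps_cong m g f"
  by (simp add: fps_cong_iff cong_sym_eq)

lemma fps_cong_trans [trans]: "fps_cong m f g \<Longrightarrow> fps_cong m g h \<Longrightarrow> fps_cong m f h"
  by (meson cong_trans fps_cong_iff)

lemma fps_cong_mult: "fps_cong m f g \<Longrightarrow> fps_cong m f' g' \<Longrightarrow> fps_cong m (f * f') (g * g')"
proof -
  assume "fps_cong m f g" "fps_cong m f' g'"
  then obtain h h' where "f = g + fps_const m * h" "f' = g' + fps_const m * h'" unfolding fps_cong_def by blast
  then have "f * f' = g * g' + fps_const m * (h * g' + g * h' + fps_const m * h * h')"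
    by (simp add: algebra_simps)
  then show ?thesis unfolding fps_cong_def by blast
qed

lemma fps_cong_power: "fps_cong m f g \<Longrightarrow> fps_cong m (f ^ k) (g ^ k)"
  by (induction k) (auto intro: fps_cong_mult)

lemma fps_cong_prod: "(\<And>i. i \<in> A \<Longrightarrow> fps_cong m (F i) (G i)) \<Longrightarrow> fps_cong m (\<Prod>i\<in>A. F i) (\<Prod>i\<in>A. G i)"
  by (induction A rule: infinite_finite_induct) (auto intro: fps_cong_mult)

lemma fps_limit_fps_cong:
  assumes "fps_limit f P" "fps_limit g R" "\<And>n. fps_cong m (P n) (R n)"
  shows "fps_cong m f g"
  unfolding fps_cong_iff
proof
  fix i
  obtain N1 where 1: "\<forall>n\<ge>N1. eq_below (Suc i) (P n) f" using assms(1) unfolding fps_limit_def by blast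
  obtain N2 where 2: "\<forall>n\<ge>N2. eq_below (Suc i) (R n) g" using assms(2) unfolding fps_limit_def by blast
  define n where "n = max N1 N2"
  have "P n $ i = f $ i" "R n $ i = g $ i" using 1 2 unfolding n_def eq_below_iff by auto
  moreover have "[P n $ i = R n $ i] (mod m)" using assms(3) fps_cong_iff by blast
  ultimately show "[f $ i = g $ i] (mod m)" by simp
qed

lemma fps_cong_cancel_unit:
  assumes "fps_cong m (f * u) (g * u)" "u $ 0 = 1"
  shows "fps_cong m f g"
proof -
  define v where "v = fps_right_inverse u 1"
  have uv: "u * v = 1" unfolding v_def by (rule fps_right_inverse) (simp add: assms)
  have "fps_cong m (f * u * v) (g * u * v)" using assms(1) fps_cong_mult fps_cong_refl by blast
  then show ?thesis by (simp add: mult.assoc uv)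
qed

lemma eq_below_1_mult:
  assumes "eq_below w P 1" "eq_below w R 1" shows "eq_below w (P * R) 1"
  using eq_below_mult[OF assms] by simp

lemma eq_below_1_plus_X_power: "j \<le> m \<Longrightarrow> eq_below j (1 + c * X ^ m) 1"
  by (auto simp: eq_below_iff fps_X_power_mult_right_nth mult.commute)

definition admissible :: "(nat \<Rightarrow> int fps) \<Rightarrow> bool" where
  "admissible F \<longleftrightarrow> (\<forall>j. eq_below j (F j) 1)"

lemma admissible_limit: "admissible F \<Longrightarrow> fps_limit (fps_prodinf F) (\<lambda>n. \<Prod>j<n. F j)"
  unfolding admissible_def by (rule fps_limit_prodinf) auto

lemma admissible_mult: "admissible F \<Longrightarrow> admissible G \<Longrightarrow> admissible (\<lambda>j. F j * G j)"
  unfolding admissible_def using eq_below_1_mult by blast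

lemma admissible_power: "admissible F \<Longrightarrow> admissible (\<lambda>j. F j ^ k)"
  unfolding admissible_def by (induction k) (auto intro: eq_below_1_mult)

lemma admissible_1_plus_X_power: "(\<And>j. j \<le> g j) \<Longrightarrow> admissible (\<lambda>j. 1 + c * X ^ g j)"
  unfolding admissible_def using eq_below_1_plus_X_power by blast

lemma admissible_1_minus_X_power: "(\<And>j. j \<le> g j) \<Longrightarrow> admissible (\<lambda>j. 1 - X ^ g j)"
  using admissible_1_plus_X_power[of g "-1"] by simp

lemma prodinf_mult: "admissible F \<Longrightarrow> admissible G \<Longrightarrow> fps_prodinf (\<lambda>j. F j * G j) = fps_prodinf F * fps_prodinf G"
proof -
  assume F: "admissible F" and G: "admissible G"
  have "fps_limit (fps_prodinf F * fps_prodinf G) (\<lambda>n. \<Prod>j<n. F j * G j)"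
    unfolding prod.distrib by (rule fps_limit_mult[OF admissible_limit[OF F] admissible_limit[OF G]])
  then show ?thesis using fps_limit_unique[OF admissible_limit[OF admissible_mult[OF F G]]] by blast
qed

lemma prodinf_power: "admissible F \<Longrightarrow> fps_prodinf (\<lambda>j. F j ^ k) = fps_prodinf F ^ k"
proof (induction k)
  case 0
  have "fps_prodinf (\<lambda>j. 1) = 1"
    by (rule fps_limit_unique[OF admissible_limit]) (auto simp: admissible_def fps_limit_const)
  then show ?case by simp
next
  case (Suc k)
  have "fps_prodinf (\<lambda>j. F j ^ Suc k) = fps_prodinf (\<lambda>j. F j * F j ^ k)" by simp
  also have "\<dots> = fps_prodinf F * fps_prodinf (\<lambda>j. F j ^ k)"
    by (rule prodinf_mult) (use Suc admissible_power in auto)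
  finally show ?case using Suc by simp
qed

lemma prodinf_fps_cong:
  assumes "admissible F" "admissible G" "\<And>j. fps_cong m (F j) (G j)"
  shows "fps_cong m (fps_prodinf F) (fps_prodinf G)"
  by (rule fps_limit_fps_cong[OF admissible_limit[OF assms(1)] admissible_limit[OF assms(2)]]) (simp add: fps_cong_prod assms(3))

section \<open>Rothe's identity and Jacobi's triple product\<close>

(* tri n = n (n - 1) / 2 *)

fun tri :: "nat \<Rightarrow> nat" where
  "tri 0 = 0"
| "tri (Suc n) = tri n + n"

lemma tri_add: "tri (n + t) = tri n + tri t + n * t"
  by (induction t) auto

lemma tri_ge: "t \<le> Suc (tri t)"
  by (induction t) auto

lemma tri_twice: "2 * tri u + u = u * u"
  by (induction u) (auto simp: algebra_simps)

lemma tri_less: "1 \<le> m \<Longrightarrow> m < n \<Longrightarrow> tri m < tri n"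
proof (induction n)
  case 0 then show ?case by simp
next
  case (Suc n)
  then have "m < n \<or> m = n" by auto
  then show ?case
  proof
    assume "m < n" then show ?case using Suc by simp
  next
    assume "m = n" then show ?case using Suc by simp
  qed
qed

lemma tri_inj: "1 \<le> m \<Longrightarrow> 1 \<le> n \<Longrightarrow> tri m = tri n \<Longrightarrow> m = n"
  by (metis linorder_neqE_nat tri_less less_irrefl)

lemma tri_0_iff: "tri t = 0 \<longleftrightarrow> t \<le> 1"
proof
  assume "tri t = 0"
  then show "t \<le> 1" using tri_less[of 1 t] by (cases "t \<le> 1") auto
next
  assume "t \<le> 1" then show "tri t = 0" by (cases t) auto
qed

lemma tri_Suc_div: "tri (Suc i) = i * (i + 1) div 2"
proof -
  have "2 * tri (Suc i) + Suc i = Suc i * Suc i" by (rule tri_twice)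
  then have "2 * tri (Suc i) = i * (i + 1)" by simp
  then show ?thesis by simp
qed

fun qbin :: "'a::comm_ring_1 \<Rightarrow> nat \<Rightarrow> nat \<Rightarrow> 'a" where
  "qbin q 0 k = (if k = 0 then 1 else 0)"
| "qbin q (Suc m) k = (if k = 0 then 1 else qbin q m (k - 1) + q ^ k * qbin q m k)"

lemma qbin_0[simp]: "qbin q m 0 = 1"
  by (cases m) auto

lemma qbin_Suc_Suc: "qbin q (Suc m) (Suc k) = qbin q m k + q ^ Suc k * qbin q m (Suc k)"
  by simp

lemma qbin_gt: "k > m \<Longrightarrow> qbin q m k = 0"
  by (induction m arbitrary: k) auto

lemma prod_lessThan_add: "(\<Prod>i<m + n. f i) = (\<Prod>i<m. f i) * (\<Prod>i<n. f (m + i))"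
  for f :: "nat \<Rightarrow> 'a::comm_monoid_mult"
  by (induction n) (auto simp: mult.assoc)

lemma sum_lessThan_add: "(\<Sum>i<m + n. f i) = (\<Sum>i<m. f i) + (\<Sum>i<n. f (m + i))"
  for f :: "nat \<Rightarrow> 'a::comm_monoid_add"
  by (induction n) (auto simp: add.assoc)

lemma sum_indicator_card: "(\<Sum>t<(M::nat). if P t then (1::int) else 0) = int (card {t. t < M \<and> P t})"
proof (induction M)
  case (Suc M)
  have "{t. t < Suc M \<and> P t} = (if P M then insert M {t. t < M \<and> P t} else {t. t < M \<and> P t})" by (auto simp: less_Suc_eq)
  moreover have "finite {t. t < M \<and> P t}" by simp
  ultimately show ?case using Suc by simp
qed simp

lemma rothe_identity:
  fixes q x y :: "'a::comm_ring_1"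
  shows "(\<Prod>i<m. y + x * q ^ i) = (\<Sum>k\<le>m. qbin q m k * q ^ tri k * x ^ k * y ^ (m - k))"
proof (induction m arbitrary: x)
  case 0
  then show ?case by simp
next
  case (Suc m)
  define A where "A k = qbin q m k * q ^ tri k * (x * q) ^ k * y ^ (m - k)" for k
  have IH: "(\<Prod>i<m. y + (x * q) * q ^ i) = (\<Sum>k\<le>m. A k)"
    using Suc.IH[of "x * q"] by (simp add: A_def)
  have "(\<Prod>i<Suc m. y + x * q ^ i) = (y + x) * (\<Prod>i<m. y + (x * q) * q ^ i)"
    by (simp only: prod.lessThan_Suc_shift) (simp add: mult.assoc)
  also have "\<dots> = y * (\<Sum>k\<le>m. A k) + x * (\<Sum>k\<le>m. A k)"
    by (simp only: IH) (simp add: algebra_simps)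
  finally have L: "(\<Prod>i<Suc m. y + x * q ^ i) = y * (\<Sum>k\<le>m. A k) + x * (\<Sum>k\<le>m. A k)" .
  have A0: "A (Suc m) = 0" by (simp add: A_def qbin_gt)
  have sA: "(\<Sum>k\<le>m. A k) = A 0 + (\<Sum>k\<le>m. A (Suc k))"
    using sum.atMost_Suc_shift[of A m] A0 by (simp add: add.commute)
  define R where "R k = qbin q (Suc m) k * q ^ tri k * x ^ k * y ^ (Suc m - k)" for k
  have "(\<Sum>k\<le>Suc m. R k) = R 0 + (\<Sum>k\<le>m. R (Suc k))"
    by (rule sum.atMost_Suc_shift)
  also have "R (Suc k) = x * A k + y * A (Suc k)" if "k \<le> m" for k
  proof -
    have e1: "q ^ tri (Suc k) * x ^ Suc k = x * (q ^ tri k * (x * q) ^ k)"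
      by (simp add: power_add power_mult_distrib algebra_simps)
    have e2: "q ^ Suc k * q ^ tri (Suc k) * x ^ Suc k * y ^ (Suc m - Suc k)
              = y * (q ^ tri (Suc k) * (x * q) ^ Suc k * y ^ (m - Suc k))" if "k < m"
    proof -
      have "Suc m - Suc k = Suc (m - Suc k)" using that by simp
      then show ?thesis by (simp add: power_mult_distrib algebra_simps)
    qed
    show ?thesis
    proof (cases "k < m")
      case True
      have "R (Suc k) = qbin q m k * (q ^ tri (Suc k) * x ^ Suc k) * y ^ (m - k)
             + qbin q m (Suc k) * (q ^ Suc k * q ^ tri (Suc k) * x ^ Suc k * y ^ (Suc m - Suc k))"
        by (simp add: R_def algebra_simps)
      also have "\<dots> = x * A k + y * A (Suc k)"
        unfolding e1 e2[OF True] A_def by (simp add: algebra_simps)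
      finally show ?thesis .
    next
      case False
      then have "k = m" using that by simp
      then show ?thesis using e1 by (simp add: R_def A_def qbin_gt algebra_simps)
    qed
  qed
  then have "(\<Sum>k\<le>m. R (Suc k)) = (\<Sum>k\<le>m. x * A k + y * A (Suc k))"
    by (intro sum.cong) auto
  finally have "(\<Sum>k\<le>Suc m. R k) = R 0 + x * (\<Sum>k\<le>m. A k) + y * (\<Sum>k\<le>m. A (Suc k))"
    by (simp add: sum.distrib sum_distrib_left add.assoc)
  moreover have "R 0 = y * A 0" by (simp add: R_def A_def)
  ultimately have "(\<Sum>k\<le>Suc m. R k) = y * (\<Sum>k\<le>m. A k) + x * (\<Sum>k\<le>m. A k)"
    using sA by (simp add: algebra_simps)
  then show ?case using L by (simp add: R_def)
qed

lemma prod_monomials: "(\<Prod>i<n. E * X ^ (a + b * i)) = E ^ n * X ^ (a * n + b * tri n)"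
  by (induction n) (auto simp: power_add algebra_simps)

definition triple_prod_fin :: "nat \<Rightarrow> nat \<Rightarrow> nat \<Rightarrow> int \<Rightarrow> nat \<Rightarrow> int fps" where
  "triple_prod_fin b a c e n = (\<Prod>i<n. (1 + fps_const e * X ^ (b * i + a)) * (1 + fps_const e * X ^ (b * i + c)))"

(* Rothe's identity with q = X^b, x = e X^a, y = X^(b n) and 2n factors: the first n factors
   are a monomial times the reversed second half of the finite triple product, the last n
   factors are X^(b n) times its first half. *)

lemma rothe_product_side:
  assumes bac: "b = a + c" and e: "e * e = 1"
  shows "(\<Prod>i<n + n. X ^ (b * n) + (fps_const e * X ^ a) * (X ^ b) ^ i)
       = fps_const e ^ n * X ^ (a * n + b * tri n + b * n * n) * triple_prod_fin b a c e n"
proof -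
  define E where "E = fps_const e"
  have EE: "E * E = 1" using e unfolding E_def by (metis fps_const_1_eq_1 fps_const_mult)
  define f where "f i = X ^ (b * n) + (E * X ^ a) * (X ^ b) ^ i" for i
  have upper: "f (n + i) = X ^ (b * n) * (1 + E * X ^ (b * i + a))" for i
    by (simp add: f_def power_add power_mult algebra_simps flip: power_mult)
  have lower: "f i = (E * X ^ (a + b * i)) * (1 + E * X ^ (b * (n - Suc i) + c))" if "i < n" for i
  proof -
    have "b * (n - Suc i) + c + (a + b * i) = b * n"
    proof -
      have "n = Suc i + (n - Suc i)" using that by simp
      then have "b * n = b * Suc i + b * (n - Suc i)" by (metis add_mult_distrib2)
      then show ?thesis using bac by (simp add: algebra_simps)
    qed
    then have "X ^ (b * (n - Suc i) + c) * X ^ (a + b * i) = X ^ (b * n)"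
      by (simp flip: power_add)
    then have "(E * X ^ (a + b * i)) * (E * X ^ (b * (n - Suc i) + c)) = X ^ (b * n)"
      using EE by (metis (no_types, lifting) mult.assoc mult.commute mult.left_commute mult_1)
    then show ?thesis
      by (simp add: f_def algebra_simps power_add power_mult flip: power_mult)
  qed
  have "(\<Prod>i<n. f i) = (\<Prod>i<n. E * X ^ (a + b * i)) * (\<Prod>i<n. 1 + E * X ^ (b * (n - Suc i) + c))"
    using lower by (simp add: prod.distrib[symmetric])
  also have "(\<Prod>i<n. 1 + E * X ^ (b * (n - Suc i) + c)) = (\<Prod>i<n. 1 + E * X ^ (b * i + c))"
    using prod.nat_diff_reindex[of "\<lambda>i. 1 + E * X ^ (b * i + c)" n] by simp
  finally have prod_lower: "(\<Prod>i<n. f i) = (E ^ n * X ^ (a * n + b * tri n)) * (\<Prod>i<n. 1 + E * X ^ (b * i + c))"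
    by (simp add: prod_monomials)
  have prod_upper: "(\<Prod>i<n. f (n + i)) = X ^ (b * n * n) * (\<Prod>i<n. 1 + E * X ^ (b * i + a))"
    by (simp add: upper prod.distrib power_mult)
  have "(\<Prod>i<n + n. f i) = E ^ n * X ^ (a * n + b * tri n + b * n * n) * triple_prod_fin b a c e n"
    unfolding prod_lessThan_add prod_lower prod_upper triple_prod_fin_def E_def[symmetric]
    unfolding prod.distrib by (simp add: power_add mult_ac)
  then show ?thesis by (simp add: f_def E_def)
qed

lemma rothe_sum_side:
  fixes e :: int and a b c n :: nat
  assumes bac: "b = a + c" and e: "e * e = 1"
  defines "C \<equiv> fps_const e ^ n * X ^ (a * n + b * tri n + b * n * n)"
  shows "(\<Sum>k\<le>n + n. qbin (X ^ b) (n + n) k * (X ^ b) ^ tri k * (fps_const e * X ^ a) ^ k * (X ^ (b * n)) ^ (n + n - k))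
       = C * ((\<Sum>t<Suc n. qbin (X ^ b) (n + n) (n + t) * (fps_const e ^ t * X ^ (b * tri t + a * t)))
            + (\<Sum>t<n. qbin (X ^ b) (n + n) (n - Suc t) * (fps_const e ^ Suc t * X ^ (b * tri (Suc t) + c * Suc t))))"
proof -
  define E where "E = fps_const e"
  have EE: "E * E = 1" using e unfolding E_def by (metis fps_const_1_eq_1 fps_const_mult)
  define trm where "trm k = qbin (X ^ b) (n + n) k * (X ^ b) ^ tri k * (E * X ^ a) ^ k * (X ^ (b * n)) ^ (n + n - k)" for k
  have trm_gen: "trm k = qbin (X ^ b) (n + n) k * (E ^ k * X ^ (b * tri k + a * k + b * n * (n + n - k)))" for k
    by (simp add: trm_def power_add power_mult_distrib algebra_simps flip: power_mult)
  have upper: "trm (n + t) = C * (qbin (X ^ b) (n + n) (n + t) * (E ^ t * X ^ (b * tri t + a * t)))"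
    if "t \<le> n" for t
  proof -
    have "n * t + n * (n - t) = n * n" using that by (metis add_mult_distrib2 le_add_diff_inverse)
    then have "b * (n * t) + b * (n * (n - t)) = b * (n * n)" by (metis add_mult_distrib2)
    then have "b * tri (n + t) + a * (n + t) + b * n * (n + n - (n + t))
             = a * n + b * tri n + b * n * n + (b * tri t + a * t)"
      by (simp add: tri_add algebra_simps)
    then show ?thesis unfolding trm_gen C_def E_def by (simp add: power_add algebra_simps)
  qed
  have lower: "trm (n - Suc t) = C * (qbin (X ^ b) (n + n) (n - Suc t) * (E ^ Suc t * X ^ (b * tri (Suc t) + c * Suc t)))"
    if "t < n" for t
  proof -
    define k u where "k = n - Suc t" and "u = Suc t"
    have n: "n = k + u" using that by (simp add: k_def u_def)
    have "b * (2 * tri u + u) = b * (u * u)" by (simp add: tri_twice)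
    then have exponent: "b * tri k + a * k + b * n * (n + n - k) = a * n + b * tri n + b * n * n + (b * tri u + c * u)"
      unfolding n using bac by (simp add: tri_add algebra_simps)
    have sign: "E ^ k = E ^ n * E ^ u"
    proof -
      have "E ^ u * E ^ u = 1" using EE by (metis power_mult_distrib power_one)
      moreover have "E ^ n * E ^ u = E ^ k * (E ^ u * E ^ u)" unfolding n by (simp add: power_add mult.assoc)
      ultimately show ?thesis by simp
    qed
    have "trm (n - Suc t) = qbin (X^b) (n+n) k * (E^k * X^(b*tri k + a*k + b*n*(n+n-k)))"
      by (simp add: trm_gen k_def)
    also have "\<dots> = C * (qbin (X^b) (n+n) k * (E^u * X^(b*tri u + c*u)))"
      unfolding exponent sign by (simp add: C_def E_def power_add mult_ac)
    finally show ?thesis by (simp add: k_def u_def)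
  qed
  have "(\<Sum>k\<le>n + n. trm k) = (\<Sum>k<n. trm k) + (\<Sum>t<Suc n. trm (n + t))"
    by (simp add: lessThan_Suc_atMost[symmetric] sum_lessThan_add[of _ n "Suc n", simplified])
  also have "(\<Sum>k<n. trm k) = (\<Sum>t<n. trm (n - Suc t))"
    by (rule sum.nat_diff_reindex[symmetric])
  also have "(\<Sum>t<n. trm (n - Suc t)) = C * (\<Sum>t<n. qbin (X ^ b) (n + n) (n - Suc t) * (E ^ Suc t * X ^ (b * tri (Suc t) + c * Suc t)))"
    unfolding sum_distrib_left by (rule sum.cong) (simp_all add: lower)
  also have "(\<Sum>t<Suc n. trm (n + t)) = C * (\<Sum>t<Suc n. qbin (X ^ b) (n + n) (n + t) * (E ^ t * X ^ (b * tri t + a * t)))"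
    unfolding sum_distrib_left by (rule sum.cong) (simp_all add: upper less_Suc_eq_le)
  finally show ?thesis unfolding trm_def E_def by (simp add: algebra_simps)
qed

lemma triple_prod_fin_expansion:
  assumes bac: "b = a + c" and e: "e * e = 1"
  shows "triple_prod_fin b a c e n =
    (\<Sum>t<Suc n. qbin (X ^ b) (n + n) (n + t) * (fps_const e ^ t * X ^ (b * tri t + a * t)))
  + (\<Sum>t<n. qbin (X ^ b) (n + n) (n - Suc t) * (fps_const e ^ Suc t * X ^ (b * tri (Suc t) + c * Suc t)))"
proof -
  define C where "C = fps_const e ^ n * X ^ (a * n + b * tri n + b * n * n)"
  have "e \<noteq> 0" using e by auto
  have "C * triple_prod_fin b a c e n = (\<Prod>i<n + n. X ^ (b * n) + (fps_const e * X ^ a) * (X ^ b) ^ i)"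
    unfolding C_def by (rule rothe_product_side[OF bac e, symmetric])
  also note rothe_identity
  also note rothe_sum_side[OF bac e]
  finally show ?thesis using \<open>e \<noteq> 0\<close> unfolding C_def by simp
qed

definition qpoch :: "nat \<Rightarrow> nat \<Rightarrow> int fps" where
  "qpoch b m = (\<Prod>i<m. 1 - X ^ (b * (i + 1)))"

lemma qpoch_Suc: "qpoch b (Suc m) = qpoch b m * (1 - X ^ (b * (m + 1)))"
  by (simp add: qpoch_def)

lemma qpoch_qbin_eq_below:
  assumes "k \<le> m"
  shows "eq_below (b * (m - k + 1)) (qpoch b k * qbin (X ^ b) m k) 1"
  using assms
proof (induction m arbitrary: k)
  case 0
  then show ?case by (simp add: qpoch_def)
next
  case (Suc m)
  show ?case
  proof (cases k)
    case 0
    then show ?thesis by (simp add: qpoch_def)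
  next
    case (Suc j)
    have j: "j \<le> m" using Suc.prems Suc by simp
    have eq: "qpoch b k * qbin (X ^ b) (Suc m) k
        = (1 - X ^ (b * (j + 1))) * (qpoch b j * qbin (X ^ b) m j) + X ^ (b * (j + 1)) * (qpoch b (Suc j) * qbin (X ^ b) m (Suc j))"
    proof -
      have pw: "(X ^ b) ^ Suc j = X ^ (b * (j + 1))" by (metis Suc_eq_plus1 power_mult)
      have alg: "p * (1 - Y) * (q1 + Y * q2) = (1 - Y) * (p * q1) + Y * ((p * (1 - Y)) * q2)" for p Y q1 q2 :: "int fps"
        by (simp add: algebra_simps)
      show ?thesis unfolding Suc qbin_Suc_Suc qpoch_Suc pw by (rule alg)
    qed
    have A: "eq_below (b * (Suc m - k + 1)) (qpoch b j * qbin (X ^ b) m j) 1"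
      using Suc.IH[OF j] Suc by simp
    have B: "eq_below (b * (Suc m - k + 1)) (X ^ (b * (j + 1)) * (qpoch b (Suc j) * qbin (X ^ b) m (Suc j))) (X ^ (b * (j + 1)))"
    proof (cases "Suc j \<le> m")
      case True
      have "eq_below (b * (m - Suc j + 1)) (qpoch b (Suc j) * qbin (X ^ b) m (Suc j)) 1"
        using Suc.IH[OF True] .
      from eq_below_X_power_mult[OF this, of "b * (j + 1)"]
      have "eq_below (b * (m - Suc j + 1) + b * (j + 1)) (X ^ (b * (j + 1)) * (qpoch b (Suc j) * qbin (X ^ b) m (Suc j))) (X ^ (b * (j + 1)))"
        by simp
      moreover have "b * (Suc m - k + 1) \<le> b * (m - Suc j + 1) + b * (j + 1)"
        using True Suc by (simp add: algebra_simps)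
      ultimately show ?thesis by (rule eq_below_mono)
    next
      case False
      then have "qbin (X ^ b) m (Suc j) = 0" by (simp add: qbin_gt)
      moreover have "j = m" using False j by simp
      ultimately show ?thesis using Suc by (auto simp: eq_below_iff)
    qed
    have "eq_below (b * (Suc m - k + 1)) (qpoch b k * qbin (X ^ b) (Suc m) k)
          ((1 - X ^ (b * (j + 1))) * 1 + X ^ (b * (j + 1)))"
      unfolding eq by (intro eq_below_add eq_below_mult eq_below_refl A B)
    then show ?thesis by simp
  qed
qed

lemma qpoch_qbin_eq_below_full:
  assumes "k \<le> M"
  shows "eq_below (b * min (k + 1) (M - k + 1)) (qpoch b M * qbin (X ^ b) M k) 1"
proof -
  have split: "qpoch b M = qpoch b k * (\<Prod>i<M - k. 1 - X ^ (b * (k + i + 1)))"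
    using prod_lessThan_add[of "\<lambda>i. 1 - X ^ (b * (i + 1))" k "M - k"] assms
    by (simp add: qpoch_def)
  have R: "eq_below (b * (k + 1)) (\<Prod>i<M - k. 1 - X ^ (b * (k + i + 1))) (\<Prod>i<M - k. 1)"
    by (rule eq_below_prod) (auto simp: eq_below_iff)
  have "eq_below (b * min (k + 1) (M - k + 1)) (qpoch b k * qbin (X ^ b) M k * (\<Prod>i<M - k. 1 - X ^ (b * (k + i + 1)))) (1 * 1)"
    using eq_below_mult[OF eq_below_mono[OF qpoch_qbin_eq_below[OF assms]] eq_below_mono[OF R]]
    by (simp add: min_def)
  then show ?thesis by (simp add: split mult_ac)
qed

lemma eq_below_mult_monomial:
  assumes "eq_below w P 1" "sx < d \<Longrightarrow> d \<le> w + sx"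
  shows "eq_below d (P * (fps_const c * X ^ sx)) (fps_const c * X ^ sx)"
proof (cases "sx < d")
  case True
  obtain h where h: "P = 1 + X ^ w * h" using assms(1) unfolding eq_below_def by blast
  have "P * (fps_const c * X ^ sx) = fps_const c * X ^ sx + X ^ (w + sx) * (h * fps_const c)"
    by (simp add: h algebra_simps power_add)
  then have "eq_below (w + sx) (P * (fps_const c * X ^ sx)) (fps_const c * X ^ sx)"
    unfolding eq_below_def by blast
  then show ?thesis using assms(2) True eq_below_mono by blast
next
  case False
  then show ?thesis by (auto simp: eq_below_iff fps_mult_left_const_nth fps_X_power_mult_right_nth mult.assoc[symmetric])
qed

(* Sum side of the triple product: the first sum collects the terms with t >= 0, the second
   those with t < 0, written as -(t + 1). No exponent with t >= D + 2 equals D, so the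
   cut-off at D + 2 loses nothing. *)

definition theta :: "nat \<Rightarrow> nat \<Rightarrow> nat \<Rightarrow> int \<Rightarrow> int fps" where
  "theta b a c e = Abs_fps (\<lambda>D. (\<Sum>t<D + 2. if b * tri t + a * t = D then e ^ t else 0)
       + (\<Sum>t<D + 2. if b * tri (Suc t) + c * Suc t = D then e ^ Suc t else 0))"

lemma sum_lessThan_trunc:
  fixes f :: "nat \<Rightarrow> int"
  assumes "K \<le> M" "\<And>t. t \<ge> K \<Longrightarrow> f t = 0"
  shows "(\<Sum>t<M. f t) = (\<Sum>t<K. f t)"
  by (rule sum.mono_neutral_right) (use assms in auto)

lemma tri_exponent_ge: "b \<ge> 1 \<Longrightarrow> t \<le> Suc (b * tri t + a * t)"
  using tri_ge[of t] mult_le_mono1[of 1 b "tri t"] by linarith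

lemma tri_Suc_exponent_ge:
  assumes "b \<ge> 1" shows "t \<le> b * tri (Suc t) + c * Suc t"
proof -
  have "t \<le> tri (Suc t)" by simp
  also have "\<dots> \<le> b * tri (Suc t)" using mult_le_mono1[OF assms, of "tri (Suc t)"] by simp
  finally show ?thesis by linarith
qed

lemma theta_eq_below_partial_sums:
  assumes b: "b \<ge> 1" and n: "d < n"
  shows "eq_below d ((\<Sum>t<Suc n. fps_const (e ^ t) * X ^ (b * tri t + a * t))
                   + (\<Sum>t<n. fps_const (e ^ Suc t) * X ^ (b * tri (Suc t) + c * Suc t))) (theta b a c e)"
  unfolding eq_below_iff
proof (intro allI impI)
  fix i assume i: "i < d"
  define e1 e2 where "e1 t = b * tri t + a * t" and "e2 t = b * tri (Suc t) + c * Suc t" for t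
  have partial: "((\<Sum>t<Suc n. fps_const (e ^ t) * X ^ e1 t) + (\<Sum>t<n. fps_const (e ^ Suc t) * X ^ e2 t)) $ i
      = (\<Sum>t<Suc n. if e1 t = i then e ^ t else 0) + (\<Sum>t<n. if e2 t = i then e ^ Suc t else 0)"
    unfolding fps_add_nth fps_sum_nth
    by (intro arg_cong2[where f="(+)"] sum.cong refl) (auto simp: fps_mult_left_const_nth)
  have trunc1: "(\<Sum>t<Suc n. if e1 t = i then e ^ t else 0) = (\<Sum>t<i + 2. if e1 t = i then e ^ t else 0)"
  proof (rule sum_lessThan_trunc)
    show "i + 2 \<le> Suc n" using n i by linarith
    fix t assume "t \<ge> i + 2"
    then have "e1 t \<noteq> i" using tri_exponent_ge[OF b, of t a] unfolding e1_def by linarith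
    then show "(if e1 t = i then e ^ t else 0) = 0" by simp
  qed
  have trunc2: "(\<Sum>t<n. if e2 t = i then e ^ Suc t else 0) = (\<Sum>t<i + 2. if e2 t = i then e ^ Suc t else 0)"
  proof (rule sum_lessThan_trunc)
    show "i + 2 \<le> n" using n i by linarith
    fix t assume "t \<ge> i + 2"
    then have "e2 t \<noteq> i" using tri_Suc_exponent_ge[OF b, of t c] unfolding e2_def by linarith
    then show "(if e2 t = i then e ^ Suc t else 0) = 0" by simp
  qed
  show "((\<Sum>t<Suc n. fps_const (e ^ t) * X ^ e1 t) + (\<Sum>t<n. fps_const (e ^ Suc t) * X ^ e2 t)) $ i
      = theta b a c e $ i"
    unfolding partial trunc1 trunc2 by (simp only: theta_def fps_nth_Abs_fps e1_def e2_def)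
qed

lemma triple_prod_fin_limit:
  assumes b: "b \<ge> 1" and bac: "b = a + c" and e: "e * e = 1"
  shows "fps_limit (theta b a c e) (\<lambda>n. qpoch b (n + n) * triple_prod_fin b a c e n)"
  unfolding fps_limit_def
proof (intro allI)
  fix d
  show "\<exists>N. \<forall>n\<ge>N. eq_below d (qpoch b (n + n) * triple_prod_fin b a c e n) (theta b a c e)"
  proof (intro exI[of _ "2 * d + 2"] allI impI)
    fix n assume n: "n \<ge> 2 * d + 2"
    have bx: "x \<le> b * x" for x using mult_le_mono1[OF b, of x] by simp
    define e1 e2 where "e1 t = b * tri t + a * t" and "e2 t = b * tri (Suc t) + c * Suc t" for t
    have main: "qpoch b (n + n) * triple_prod_fin b a c e n =
       (\<Sum>t<Suc n. (qpoch b (n + n) * qbin (X ^ b) (n + n) (n + t)) * (fps_const (e ^ t) * X ^ e1 t))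
     + (\<Sum>t<n. (qpoch b (n + n) * qbin (X ^ b) (n + n) (n - Suc t)) * (fps_const (e ^ Suc t) * X ^ e2 t))"
      unfolding triple_prod_fin_expansion[OF bac e, of n] e1_def e2_def distrib_left sum_distrib_left
      by (intro arg_cong2[where f="(+)"] sum.cong refl) (simp_all add: mult.assoc fps_const_power)
    have upper: "eq_below d ((qpoch b (n + n) * qbin (X ^ b) (n + n) (n + t)) * (fps_const (e ^ t) * X ^ e1 t))
                            (fps_const (e ^ t) * X ^ e1 t)" if "t < Suc n" for t
    proof (rule eq_below_mult_monomial)
      show "eq_below (b * min (n + t + 1) (n + n - (n + t) + 1)) (qpoch b (n + n) * qbin (X ^ b) (n + n) (n + t)) 1"
        using qpoch_qbin_eq_below_full[of "n + t" "n + n" b] that by simp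
      assume "e1 t < d"
      then have "t \<le> d" using tri_exponent_ge[OF b, of t a] unfolding e1_def by simp
      then have "d \<le> min (n + t + 1) (n + n - (n + t) + 1)" using n by simp
      also have "\<dots> \<le> b * min (n + t + 1) (n + n - (n + t) + 1)" by (rule bx)
      finally show "d \<le> b * min (n + t + 1) (n + n - (n + t) + 1) + e1 t" by simp
    qed
    have lower: "eq_below d ((qpoch b (n + n) * qbin (X ^ b) (n + n) (n - Suc t)) * (fps_const (e ^ Suc t) * X ^ e2 t))
                            (fps_const (e ^ Suc t) * X ^ e2 t)" if "t < n" for t
    proof (rule eq_below_mult_monomial)
      show "eq_below (b * min (n - Suc t + 1) (n + n - (n - Suc t) + 1)) (qpoch b (n + n) * qbin (X ^ b) (n + n) (n - Suc t)) 1"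
        using qpoch_qbin_eq_below_full[of "n - Suc t" "n + n" b] that by simp
      assume "e2 t < d"
      then have "t < d" using tri_Suc_exponent_ge[OF b, of t c] unfolding e2_def by simp
      then have "d \<le> min (n - Suc t + 1) (n + n - (n - Suc t) + 1)" using n by simp
      also have "\<dots> \<le> b * min (n - Suc t + 1) (n + n - (n - Suc t) + 1)" by (rule bx)
      finally show "d \<le> b * min (n - Suc t + 1) (n + n - (n - Suc t) + 1) + e2 t" by simp
    qed
    have "eq_below d (qpoch b (n + n) * triple_prod_fin b a c e n)
            ((\<Sum>t<Suc n. fps_const (e ^ t) * X ^ e1 t) + (\<Sum>t<n. fps_const (e ^ Suc t) * X ^ e2 t))"
      unfolding main by (intro eq_below_add; rule eq_below_sum) (use upper lower in auto)
    moreover have "eq_below d ((\<Sum>t<Suc n. fps_const (e ^ t) * X ^ e1 t) + (\<Sum>t<n. fps_const (e ^ Suc t) * X ^ e2 t))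
                      (theta b a c e)"
      unfolding e1_def e2_def by (rule theta_eq_below_partial_sums[OF b]) (use n in simp)
    ultimately show "eq_below d (qpoch b (n + n) * triple_prod_fin b a c e n) (theta b a c e)"
      by (rule eq_below_trans)
  qed
qed

lemma admissible_ell: "b \<ge> 1 \<Longrightarrow> admissible (\<lambda>j. 1 - X ^ (b * (j + 1)))"
  by (rule admissible_1_minus_X_power) (metis add.commute le_add2 le_trans mult_le_mono1 mult_1)

lemma ell_limit: "b \<ge> 1 \<Longrightarrow> fps_limit (ell b) (qpoch b)"
  unfolding ell_def using admissible_limit[OF admissible_ell] by (simp add: qpoch_def[abs_def])

lemma ell_nth_0: "b \<ge> 1 \<Longrightarrow> ell b $ 0 = 1"
  by (simp add: ell_def fps_prodinf_def)

lemma ell_nonzero: "b \<ge> 1 \<Longrightarrow> ell b \<noteq> 0"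
  using ell_nth_0 by force

definition triple_prod :: "nat \<Rightarrow> nat \<Rightarrow> nat \<Rightarrow> int \<Rightarrow> int fps" where
  "triple_prod b a c e = fps_prodinf (\<lambda>i. (1 + fps_const e * X ^ (b * i + a)) * (1 + fps_const e * X ^ (b * i + c)))"

lemma fps_const_minus_one: "fps_const (-1::int) = -1"
  by (metis fps_const_neg fps_const_1_eq_1)

lemma admissible_triple_prod: "b \<ge> 1 \<Longrightarrow> admissible (\<lambda>i. (1 + fps_const e * X ^ (b * i + a)) * (1 + fps_const e * X ^ (b * i + c)))"
proof -
  assume b: "b \<ge> 1"
  have bi: "i \<le> b * i" for i using mult_le_mono1[OF b, of i] by simp
  have "i \<le> b * i + a" "i \<le> b * i + c" for i by (meson bi le_add1 le_trans)+
  then show ?thesis by (intro admissible_mult admissible_1_plus_X_power)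
qed

theorem jacobi_triple_product:
  assumes b: "b \<ge> 1" and bac: "b = a + c" and e: "e * e = 1"
  shows "ell b * triple_prod b a c e = theta b a c e"
proof -
  have "fps_limit (triple_prod b a c e) (triple_prod_fin b a c e)"
    unfolding triple_prod_def using admissible_limit[OF admissible_triple_prod[OF b]] by (simp add: triple_prod_fin_def[abs_def])
  moreover have "fps_limit (ell b) (\<lambda>n. qpoch b (n + n))"
    by (rule fps_limit_subseq[OF ell_limit[OF b]]) simp
  ultimately have "fps_limit (ell b * triple_prod b a c e) (\<lambda>n. qpoch b (n + n) * triple_prod_fin b a c e n)"
    using fps_limit_mult by blast
  then show ?thesis using triple_prod_fin_limit[OF assms] fps_limit_unique by blast
qed

section \<open>Theta series of eta products modulo 2\<close>

lemma tri_level_sets: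
  assumes k: "k \<ge> 1" and u: "2 \<le> u"
  shows "{t. t < k * tri u + 2 \<and> k * tri t = k * tri u} = {u}"
    and "{t. t < k * tri u + 2 \<and> k * tri (Suc (Suc t)) = k * tri u} = {u - 2}"
proof -
  have "tri u \<le> k * tri u" using mult_le_mono1[OF k, of "tri u"] by simp
  then have ub: "u < k * tri u + 2" using tri_ge[of u] by linarith
  have eq: "k * tri t = k * tri u \<longleftrightarrow> t = u" for t
  proof
    assume "k * tri t = k * tri u"
    then have "tri t = tri u" using k by simp
    moreover have "tri u \<noteq> 0" using u tri_0_iff by simp
    ultimately have "\<not> t \<le> 1" using tri_0_iff[of t] by simp
    then show "t = u" using tri_inj[of t u] u \<open>tri t = tri u\<close> by simp
  qed simp
  then show "{t. t < k * tri u + 2 \<and> k * tri t = k * tri u} = {u}" using ub by auto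
  have "k * tri (Suc (Suc t)) = k * tri u \<longleftrightarrow> t = u - 2" for t
    using eq[of "Suc (Suc t)"] u by (auto simp del: tri.simps)
  then show "{t. t < k * tri u + 2 \<and> k * tri (Suc (Suc t)) = k * tri u} = {u - 2}" using ub by auto
qed

lemma theta_psi:
  assumes k: "k \<ge> 1"
  shows "theta k 0 k 1 = 2 * psi k"
proof (rule fps_ext)
  fix D
  have th: "theta k 0 k 1 $ D = int (card {t. t < D + 2 \<and> k * tri t = D}) + int (card {t. t < D + 2 \<and> k * tri (Suc (Suc t)) = D})"
  proof -
    have h2: "(k * tri (Suc t) + k * Suc t = D) = (k * tri (Suc (Suc t)) = D)" for t by (simp add: algebra_simps)
    have "theta k 0 k 1 $ D = (\<Sum>t<D+2. if k * tri t + 0 * t = D then 1 else 0) + (\<Sum>t<D+2. if k*tri(Suc t) + k*Suc t = D then 1 else 0)"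
      by (simp only: theta_def fps_nth_Abs_fps power_one)
    then show ?thesis by (simp only: sum_indicator_card h2 mult_zero_left add_0_right)
  qed
  have ps: "psi k $ D = (if \<exists>i. D = k * tri (Suc i) then 1 else 0)"
    unfolding psi_def fps_nth_Abs_fps by (simp only: tri_Suc_div)
  show "theta k 0 k 1 $ D = (2 * psi k) $ D"
  proof (cases "\<exists>u. D = k * tri u")
    case False
    then have "\<not> (\<exists>i. D = k * tri (Suc i))" by blast
    moreover have A: "{t. t < D + 2 \<and> k * tri t = D} = {}" and B: "{t. t < D + 2 \<and> k * tri (Suc (Suc t)) = D} = {}"
      using False by (auto simp del: tri.simps)
    ultimately have "psi k $ D = 0" unfolding ps by simp
    then show ?thesis unfolding th A B by (simp add: numeral_fps_const)
  next
    case True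
    then obtain u where u: "D = k * tri u" by blast
    show ?thesis
    proof (cases "u \<le> 1")
      case True
      then have "tri u = 0" using tri_0_iff by blast
      then have D0: "D = 0" using u by simp
      have z: "k * tri t = 0 \<longleftrightarrow> t \<le> 1" for t using k tri_0_iff[of t] by simp
      have A: "{t. t < D + 2 \<and> k * tri t = D} = {0, 1}"
        unfolding D0 z by auto
      have B: "{t. t < D + 2 \<and> k * tri (Suc (Suc t)) = D} = {}"
        unfolding D0 z by auto
      have "psi k $ D = 1" unfolding ps using D0 by auto
      then show ?thesis unfolding th A B by (simp add: numeral_fps_const)
    next
      case False
      then have A: "{t. t < D + 2 \<and> k * tri t = D} = {u}"
        and B: "{t. t < D + 2 \<and> k * tri (Suc (Suc t)) = D} = {u - 2}"
        using tri_level_sets[OF k, of u] u by auto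
      have "\<exists>i. D = k * tri (Suc i)" using u False by (intro exI[of _ "u - 1"]) simp
      then have "psi k $ D = 1" unfolding ps by simp
      then show ?thesis unfolding th A B by (simp add: numeral_fps_const)
    qed
  qed
qed

definition neg_ell_sq :: "nat \<Rightarrow> int fps" where
  "neg_ell_sq k = fps_prodinf (\<lambda>i. (1 + X ^ (k * (i + 1))) ^ 2)"

lemma admissible_neg_ell_sq: "k \<ge> 1 \<Longrightarrow> admissible (\<lambda>i. (1 + X ^ (k * (i + 1))) ^ 2)"
proof -
  assume k: "k \<ge> 1"
  have "admissible (\<lambda>j. 1 + 1 * X ^ (k * (j + 1)))"
  proof (rule admissible_1_plus_X_power)
    fix j show "j \<le> k * (j + 1)" using mult_le_mono1[OF k, of "j+1"] by simp
  qed
  from admissible_power[OF this, of 2] show ?thesis by simp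
qed

lemma triple_prod_limit: "b \<ge> 1 \<Longrightarrow> fps_limit (triple_prod b a c e) (triple_prod_fin b a c e)"
  unfolding triple_prod_def triple_prod_fin_def[abs_def] by (rule admissible_limit[OF admissible_triple_prod])

lemma triple_prod_psi: "k \<ge> 1 \<Longrightarrow> triple_prod k 0 k 1 = 2 * neg_ell_sq k"
proof -
  assume k: "k \<ge> 1"
  define Wn where "Wn n = (\<Prod>i<n. (1 + X ^ (k * (i + 1))) ^ 2)" for n
  have rec: "triple_prod_fin k 0 k 1 (Suc n) = 2 * Wn n * (1 + X ^ (k * (n + 1)))" for n
  proof (induction n)
    case 0
    then show ?case by (simp add: triple_prod_fin_def Wn_def)
  next
    case (Suc n)
    have "triple_prod_fin k 0 k 1 (Suc (Suc n)) = triple_prod_fin k 0 k 1 (Suc n) * ((1 + X ^ (k * Suc n)) * (1 + X ^ (k * Suc n + k)))"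
      by (simp add: triple_prod_fin_def)
    also have "\<dots> = 2 * (Wn n * (1 + X ^ (k * (n + 1))) ^ 2) * (1 + X ^ (k * (Suc n + 1)))"
      unfolding Suc by (simp add: power2_eq_square algebra_simps)
    also have "Wn n * (1 + X ^ (k * (n + 1))) ^ 2 = Wn (Suc n)" by (simp add: Wn_def)
    finally show ?case by (simp add: mult.assoc)
  qed
  have c1: "fps_limit (triple_prod k 0 k 1) (\<lambda>n. triple_prod_fin k 0 k 1 (Suc n))"
  proof -
    show ?thesis by (rule fps_limit_subseq[OF triple_prod_limit[OF k]]) simp
  qed
  have c2: "fps_limit (2 * neg_ell_sq k) (\<lambda>n. triple_prod_fin k 0 k 1 (Suc n))"
  proof (rule fps_limit_eq_below)
    show "fps_limit (2 * neg_ell_sq k) (\<lambda>n. 2 * Wn n)"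
      using fps_limit_mult[OF fps_limit_const[of 2] admissible_limit[OF admissible_neg_ell_sq[OF k]]] by (simp add: neg_ell_sq_def Wn_def)
    fix d
    show "\<exists>N. \<forall>n\<ge>N. eq_below d (triple_prod_fin k 0 k 1 (Suc n)) (2 * Wn n)"
    proof (intro exI[of _ d] allI impI)
      fix n assume "d \<le> n"
      then have "d \<le> k * (n + 1)" using mult_le_mono1[OF k, of "n+1"] by simp
      then have "eq_below d (1 + X ^ (k * (n + 1))) 1" using eq_below_1_plus_X_power[of d _ 1] by simp
      then show "eq_below d (triple_prod_fin k 0 k 1 (Suc n)) (2 * Wn n)"
        unfolding rec using eq_below_mult[OF eq_below_refl] by fastforce
    qed
  qed
  show ?thesis using fps_limit_unique[OF c1 c2] .
qed

lemma psi_product: "k \<ge> 1 \<Longrightarrow> ell k * neg_ell_sq k = psi k"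
proof -
  assume k: "k \<ge> 1"
  have "ell k * (2 * neg_ell_sq k) = 2 * psi k"
    using jacobi_triple_product[OF k, of 0 k 1] triple_prod_psi[OF k] theta_psi[OF k] by simp
  then show ?thesis by (simp add: mult.left_commute)
qed

lemma fps_cong_plus_minus: "fps_cong 2 (1 + x) (1 - x)"
  unfolding fps_cong_def by (rule exI[of _ x]) (simp add: algebra_simps numeral_fps_const)

lemma fps_cong_square: "fps_cong 2 ((1 - x) ^ 2) (1 - x ^ 2)"
  unfolding fps_cong_def by (rule exI[of _ "x^2 - x"]) (simp add: algebra_simps power2_eq_square numeral_fps_const)

lemma ell_square_mod2: "k \<ge> 1 \<Longrightarrow> fps_cong 2 (ell k ^ 2) (ell (2 * k))"
proof -
  assume k: "k \<ge> 1"
  have "ell k ^ 2 = fps_prodinf (\<lambda>j. (1 - X ^ (k * (j + 1))) ^ 2)"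
    unfolding ell_def by (rule prodinf_power[symmetric, OF admissible_ell[OF k]])
  moreover have "fps_cong 2 (fps_prodinf (\<lambda>j. (1 - X ^ (k * (j + 1))) ^ 2)) (fps_prodinf (\<lambda>j. 1 - X ^ (2 * k * (j + 1))))"
  proof (rule prodinf_fps_cong)
    show "admissible (\<lambda>j. (1 - X ^ (k * (j + 1))) ^ 2)" by (rule admissible_power[OF admissible_ell[OF k]])
    show "admissible (\<lambda>j. 1 - X ^ (2 * k * (j + 1)))" using admissible_ell[of "2*k"] k by simp
    fix j
    show "fps_cong 2 ((1 - X ^ (k * (j + 1))) ^ 2) (1 - X ^ (2 * k * (j + 1)))"
    proof -
      have "X ^ (2 * k * (j + 1)) = (X ^ (k * (j + 1)))^2" by (metis mult.commute mult.assoc power_mult)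
      then show ?thesis using fps_cong_square[of "X ^ (k * (j + 1))"] by simp
    qed
  qed
  ultimately show ?thesis by (simp add: ell_def)
qed

lemma psi_mod2_ell_cube: "k \<ge> 1 \<Longrightarrow> fps_cong 2 (psi k) (ell k ^ 3)"
proof -
  assume k: "k \<ge> 1"
  have "fps_cong 2 (neg_ell_sq k) (fps_prodinf (\<lambda>j. (1 - X ^ (k * (j + 1))) ^ 2))"
    unfolding neg_ell_sq_def
  proof (rule prodinf_fps_cong)
    show "admissible (\<lambda>i. (1 + X ^ (k * (i + 1))) ^ 2)" by (rule admissible_neg_ell_sq[OF k])
    show "admissible (\<lambda>j. (1 - X ^ (k * (j + 1))) ^ 2)" by (rule admissible_power[OF admissible_ell[OF k]])
    fix j show "fps_cong 2 ((1 + X ^ (k * (j + 1))) ^ 2) ((1 - X ^ (k * (j + 1))) ^ 2)"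
      by (rule fps_cong_power[OF fps_cong_plus_minus])
  qed
  also have "fps_prodinf (\<lambda>j. (1 - X ^ (k * (j + 1))) ^ 2) = ell k ^ 2"
    unfolding ell_def by (rule prodinf_power[OF admissible_ell[OF k]])
  finally have "fps_cong 2 (ell k * neg_ell_sq k) (ell k * ell k ^ 2)"
    by (intro fps_cong_mult fps_cong_refl)
  then show ?thesis using psi_product[OF k] by (metis power3_eq_cube power2_eq_square mult.assoc)
qed

(* In terms of these series Euler's pentagonal theorem reads ell k = sq24 k k (mod 2), and
   psi k = sq24 (3 k) (3 k) because 8 tri (i + 1) + 1 = (2 i + 1)^2. *)

definition sq24 :: "nat \<Rightarrow> nat \<Rightarrow> int fps" where
  "sq24 a c = Abs_fps (\<lambda>M. int (card {x::nat. a * x^2 = 24 * M + c}))"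

lemma finite_sq: "a \<ge> 1 \<Longrightarrow> finite {x::nat. a * x^2 = N}"
proof -
  assume a: "a \<ge> 1"
  have "{x::nat. a * x^2 = N} \<subseteq> {..N}"
  proof
    fix x assume "x \<in> {x. a * x^2 = N}"
    then have "a * x^2 = N" by simp
    moreover have "x \<le> a * x^2"
    proof -
      have "x \<le> x^2" by (simp add: power2_eq_square le_square)
      also have "\<dots> \<le> a * x^2" using mult_le_mono1[OF a] by simp
      finally show ?thesis .
    qed
    ultimately show "x \<in> {..N}" by simp
  qed
  then show ?thesis by (rule finite_subset) simp
qed

lemma theta_mod2:
  assumes "odd e"
  shows "[theta b a c e $ M = int (card {t. t < M + 2 \<and> b * tri t + a * t = M})
                             + int (card {t. t < M + 2 \<and> b * tri (Suc t) + c * Suc t = M})] (mod 2)"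
proof -
  have o: "[e ^ n = 1] (mod 2)" for n
    using assms by (simp add: cong_def odd_iff_mod_2_eq_one[symmetric])
  have s1: "[(\<Sum>t<M+2. if P t then e ^ f t else 0) = (\<Sum>t<M+2. if P t then 1 else 0)] (mod 2)" for P f
    by (rule cong_sum) (simp add: o)
  show ?thesis
    unfolding theta_def fps_nth_Abs_fps sum_indicator_card[symmetric]
    by (intro cong_add s1)
qed

lemma card_Un_two_images:
  assumes "inj f1" "inj f2" "\<And>t t'. f1 t \<noteq> f2 t'" "S = f1 ` A \<union> f2 ` B" "finite A" "finite B"
  shows "card S = card A + card B"
proof -
  have "card (f1 ` A \<union> f2 ` B) = card (f1 ` A) + card (f2 ` B)"
    by (rule card_Un_disjoint) (use assms in auto)
  also have "\<dots> = card A + card B"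
    using assms by (simp add: card_image inj_on_subset[OF _ subset_UNIV])
  finally show ?thesis using assms(4) by simp
qed

lemma sq_mod24_mod12: "((y::nat)^2) mod 24 = ((y mod 12)^2) mod 24"
proof -
  define q r where "q = y div 12" and "r = y mod 12"
  have y: "y = 12 * q + r" by (simp add: q_def r_def)
  define z where "z = 6 * q * q + q * r"
  have "y^2 = r^2 + 24 * z" unfolding y z_def by (simp add: power2_eq_square algebra_simps)
  then have "y^2 mod 24 = r^2 mod 24" by (simp only: mod_mult_self2)
  then show ?thesis by (simp add: r_def)
qed

lemma mult_sq_mod24_mod12: "(k * (y::nat)^2) mod 24 = (k * (y mod 12)^2) mod 24"
  by (metis mod_mult_right_eq sq_mod24_mod12)

lemma nat_less_12_cases: "(r::nat) < 12 \<Longrightarrow> r = 0 \<or> r = 1 \<or> r = 2 \<or> r = 3 \<or> r = 4 \<or> r = 5 \<or> r = 6 \<or> r = 7 \<or> r = 8 \<or> r = 9 \<or> r = 10 \<or> r = 11"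
  by presburger

lemma pentagonal_residue:
  assumes "k \<in> {1, 2, 4}" "k * (y::nat)^2 = 24 * M + k"
  shows "y mod 6 = 1 \<or> y mod 6 = 5"
proof -
  have k24: "k < 24" using assms(1) by auto
  have "(k * y^2) mod 24 = k" using assms(2) k24 by simp
  then have h: "(k * (y mod 12)^2) mod 24 = k" using mult_sq_mod24_mod12[of k y] by simp
  have r: "y mod 12 < 12" by simp
  have m: "(y mod 12) mod 6 = y mod 6" by (simp add: mod_mod_cancel)
  have "k = 1 \<or> k = 2 \<or> k = 4" using assms(1) by auto
  then show ?thesis using h m nat_less_12_cases[OF r] by (elim disjE) auto
qed

lemma even_pentagonal_residue:
  assumes "k \<in> {1, 2}" "2 * k * (y::nat)^2 = 24 * M + 8 * k"
  shows "y mod 6 = 2 \<or> y mod 6 = 4"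
proof -
  have k24: "8 * k < 24" using assms(1) by auto
  have "(2 * k * y^2) mod 24 = 8 * k" using assms(2) k24 by simp
  then have h: "(2 * k * (y mod 12)^2) mod 24 = 8 * k" using mult_sq_mod24_mod12[of "2*k" y] by simp
  have r: "y mod 12 < 12" by simp
  have m: "(y mod 12) mod 6 = y mod 6" by (simp add: mod_mod_cancel)
  have "k = 1 \<or> k = 2" using assms(1) by auto
  then show ?thesis using h m nat_less_12_cases[OF r] by (elim disjE) auto
qed

lemma sq_6_5: "24 * (3 * tri (Suc v) + Suc v) + 1 = (6 * v + 5)^2"
  using tri_twice[of v] by (simp add: power2_eq_square algebra_simps)

lemma sq_6_7: "24 * (3 * tri (Suc t) + 2 * Suc t) + 1 = (6 * t + 7)^2"
  using tri_twice[of t] by (simp add: power2_eq_square algebra_simps)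

lemma sq_6_4: "12 * (6 * tri (Suc v) + Suc v) + 4 = (6 * v + 4)^2"
  using tri_twice[of v] by (simp add: power2_eq_square algebra_simps)

lemma sq_6_8: "12 * (6 * tri (Suc t) + 5 * Suc t) + 4 = (6 * t + 8)^2"
  using tri_twice[of t] by (simp add: power2_eq_square algebra_simps)

lemma qpoch_blocks: "qpoch k (n * M) = (\<Prod>i<n. \<Prod>r<M. 1 - X ^ (k * (i * M + r + 1)))"
proof (induction n)
  case 0 then show ?case by (simp add: qpoch_def)
next
  case (Suc n)
  have "qpoch k (Suc n * M) = qpoch k (n * M + M)" by (simp add: add.commute)
  also have "\<dots> = qpoch k (n * M) * (\<Prod>r<M. 1 - X ^ (k * (n * M + r + 1)))"
    unfolding qpoch_def by (rule prod_lessThan_add)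
  finally show ?case using Suc by simp
qed

lemma prod_lessThan_3: "(\<Prod>r<(3::nat). f r) = f 0 * f 1 * (f 2 :: int fps)"
proof -
  have "{..<(3::nat)} = {0,1,2}" by auto
  then show ?thesis by (simp add: mult_ac)
qed

lemma prod_lessThan_6: "(\<Prod>r<(6::nat). f r) = f 0 * f 1 * f 2 * f 3 * f 4 * (f 5 :: int fps)"
proof -
  have "{..<(6::nat)} = {0,1,2,3,4,5}" by auto
  then show ?thesis by (simp add: mult_ac)
qed

lemma prod_lessThan_2: "(\<Prod>r<(2::nat). f r) = f 0 * (f 1 :: int fps)"
proof -
  have "{..<(2::nat)} = {0,1}" by auto
  then show ?thesis by (simp add: mult_ac)
qed

lemma ell_pentagonal: "k \<ge> 1 \<Longrightarrow> ell k = theta (3 * k) k (2 * k) (-1)"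
proof -
  assume k: "k \<ge> 1"
  have k3: "3 * k \<ge> 1" using k by simp
  have eq: "qpoch k (n * 3) = qpoch (3 * k) n * triple_prod_fin (3 * k) k (2 * k) (-1) n" for n
  proof -
    have "qpoch k (n * 3) = (\<Prod>i<n. (1 - X ^ (k * (i * 3 + 0 + 1))) * (1 - X ^ (k * (i * 3 + 1 + 1))) * (1 - X ^ (k * (i * 3 + 2 + 1))))"
      unfolding qpoch_blocks prod_lessThan_3 by simp
    also have "\<dots> = (\<Prod>i<n. (1 - X ^ (3 * k * (i + 1))) * ((1 + fps_const (-1) * X ^ (3 * k * i + k)) * (1 + fps_const (-1) * X ^ (3 * k * i + 2 * k))))"
    proof (rule prod.cong)
      fix i
      have ee: "k * (i * 3 + 0 + 1) = 3 * k * i + k" "k * (i * 3 + 1 + 1) = 3 * k * i + 2 * k" "k * (i * 3 + 2 + 1) = 3 * k * (i + 1)"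
        by (simp_all add: algebra_simps)
      show "(1 - X ^ (k * (i * 3 + 0 + 1))) * (1 - X ^ (k * (i * 3 + 1 + 1))) * (1 - X ^ (k * (i * 3 + 2 + 1))) =
        (1 - X ^ (3 * k * (i + 1))) * ((1 + fps_const (-1) * X ^ (3 * k * i + k)) * (1 + fps_const (-1) * X ^ (3 * k * i + 2 * k)))"
        unfolding ee fps_const_minus_one by (simp add: mult_ac)
    qed simp
    finally show ?thesis by (simp add: prod.distrib qpoch_def triple_prod_fin_def)
  qed
  have c1: "fps_limit (ell k) (\<lambda>n. qpoch k (n * 3))"
    by (rule fps_limit_subseq[OF ell_limit[OF k]]) simp
  have c2: "fps_limit (ell (3 * k) * triple_prod (3 * k) k (2 * k) (-1)) (\<lambda>n. qpoch k (n * 3))"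
    unfolding eq by (rule fps_limit_mult[OF ell_limit[OF k3] triple_prod_limit[OF k3]])
  have "ell k = ell (3 * k) * triple_prod (3 * k) k (2 * k) (-1)" using fps_limit_unique[OF c1 c2] .
  also have "\<dots> = theta (3 * k) k (2 * k) (-1)" by (rule jacobi_triple_product) (use k in auto)
  finally show ?thesis .
qed

lemma card_squares_two_families:
  fixes K y0 M :: nat and e1 e2 :: "nat \<Rightarrow> nat"
  assumes y0: "y0 = 1 \<or> y0 = 2"
    and E1_0: "e1 0 = 0"
    and E1: "\<And>v. K * (6 * v + 6 - y0)^2 = 24 * e1 (Suc v) + K * y0^2"
    and E2: "\<And>t. K * (6 * t + 6 + y0)^2 = 24 * e2 t + K * y0^2"
    and ge1: "\<And>t. t \<le> e1 t" and ge2: "\<And>t. t \<le> e2 t"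
    and res: "\<And>y. K * y^2 = 24 * M + K * y0^2 \<Longrightarrow> y mod 6 = y0 \<or> y mod 6 = 6 - y0"
  shows "card {y. K * y^2 = 24 * M + K * y0^2} =
         card {t. t < M + 2 \<and> e1 t = M} + card {t. t < M + 2 \<and> e2 t = M}"
proof -
  define f1 where "f1 t = (case t of 0 \<Rightarrow> y0 | Suc v \<Rightarrow> 6 * v + 6 - y0)" for t
  define f2 where "f2 t = 6 * t + 6 + y0" for t
  have F1: "K * (f1 t)^2 = 24 * e1 t + K * y0^2" for t
    using E1 E1_0 by (cases t) (simp_all add: f1_def)
  have F2: "K * (f2 t)^2 = 24 * e2 t + K * y0^2" for t
    using E2 by (simp add: f2_def)
  have inj1: "inj f1"
    by (rule injI) (use y0 in \<open>auto simp: f1_def split: nat.splits\<close>)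
  have inj2: "inj f2"
    by (rule injI) (simp add: f2_def)
  have disj: "f1 t \<noteq> f2 t'" for t t'
    using y0 by (cases t) (auto simp: f1_def f2_def, presburger+)
  have "{y. K * y^2 = 24 * M + K * y0^2} =
        f1 ` {t. t < M + 2 \<and> e1 t = M} \<union> f2 ` {t. t < M + 2 \<and> e2 t = M}"
  proof (intro equalityI subsetI)
    fix y assume "y \<in> {y. K * y^2 = 24 * M + K * y0^2}"
    then have y: "K * y^2 = 24 * M + K * y0^2" by simp
    have "y = y0 \<or> (\<exists>v. y = 6 * v + 6 - y0) \<or> (\<exists>t. y = 6 * t + 6 + y0)"
      using res[OF y] y0 by presburger
    then have "(\<exists>t. y = f1 t) \<or> (\<exists>t. y = f2 t)"
      unfolding f1_def f2_def by (metis old.nat.simps(4,5))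
    then show "y \<in> f1 ` {t. t < M + 2 \<and> e1 t = M} \<union> f2 ` {t. t < M + 2 \<and> e2 t = M}"
    proof (elim disjE exE)
      fix t assume "y = f1 t"
      then have "e1 t = M" using F1[of t] y by simp
      then show ?thesis using ge1[of t] \<open>y = f1 t\<close> by auto
    next
      fix t assume "y = f2 t"
      then have "e2 t = M" using F2[of t] y by simp
      then show ?thesis using ge2[of t] \<open>y = f2 t\<close> by auto
    qed
  qed (use F1 F2 in auto)
  then show ?thesis by (rule card_Un_two_images[OF inj1 inj2 disj]) simp_all
qed

lemma card_pentagonal_squares:
  assumes k: "k \<in> {1, 2, 4}"
  shows "card {y::nat. k * y^2 = 24 * M + k} =
         card {t. t < M + 2 \<and> 3 * k * tri t + k * t = M}
       + card {t. t < M + 2 \<and> 3 * k * tri (Suc t) + 2 * k * Suc t = M}"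
proof -
  have kv: "v \<le> k * v" for v using k by auto
  have "card {y. k * y^2 = 24 * M + k * 1^2} =
         card {t. t < M + 2 \<and> 3 * k * tri t + k * t = M}
       + card {t. t < M + 2 \<and> 3 * k * tri (Suc t) + 2 * k * Suc t = M}"
  proof (intro card_squares_two_families)
    show "k * (6 * v + 6 - 1)^2 = 24 * (3 * k * tri (Suc v) + k * Suc v) + k * 1^2" for v
      using arg_cong[OF sq_6_5[of v], of "\<lambda>x. k * x"] by (simp add: algebra_simps)
    show "k * (6 * t + 6 + 1)^2 = 24 * (3 * k * tri (Suc t) + 2 * k * Suc t) + k * 1^2" for t
      using arg_cong[OF sq_6_7[of t], of "\<lambda>x. k * x"] by (simp add: algebra_simps)
    show "y mod 6 = 1 \<or> y mod 6 = 6 - 1" if "k * y^2 = 24 * M + k * 1^2" for y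
      using pentagonal_residue[OF k, of y M] that by simp
    show "t \<le> 3 * k * tri t + k * t" for t
      using kv[of t] by linarith
    show "t \<le> 3 * k * tri (Suc t) + 2 * k * Suc t" for t
      using kv[of "Suc t"] by linarith
  qed simp_all
  then show ?thesis by simp
qed

lemma ell_mod2_sq24: "k \<in> {1, 2, 4} \<Longrightarrow> fps_cong 2 (ell k) (sq24 k k)"
proof -
  assume kk: "k \<in> {1, 2, 4}"
  then have k: "k \<ge> 1" by auto
  show ?thesis unfolding fps_cong_iff ell_pentagonal[OF k]
  proof
    fix M
    show "[theta (3 * k) k (2 * k) (- 1) $ M = sq24 k k $ M] (mod 2)"
      using theta_mod2[of "-1" "3 * k" k "2 * k" M] card_pentagonal_squares[OF kk, of M] by (simp add: sq24_def)
  qed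
qed

lemma triple_prod_6_regroup:
  assumes k: "k \<ge> 1"
  shows "triple_prod (6 * k) k (5 * k) (-1) * ell (2 * k) * ell (3 * k) = ell k * ell (6 * k)"
proof -
  have k2: "2 * k \<ge> 1" and k3: "3 * k \<ge> 1" and k6: "6 * k \<ge> 1" using k by auto
  have eq: "triple_prod_fin (6 * k) k (5 * k) (-1) n * qpoch (2 * k) (n * 3) * qpoch (3 * k) (n * 2) = qpoch k (n * 6) * qpoch (6 * k) n" for n
  proof -
    have "triple_prod_fin (6 * k) k (5 * k) (-1) n * qpoch (2 * k) (n * 3) * qpoch (3 * k) (n * 2)
      = (\<Prod>i<n. ((1 + fps_const (-1) * X ^ (6 * k * i + k)) * (1 + fps_const (-1) * X ^ (6 * k * i + 5 * k)))
            * ((1 - X ^ (2 * k * (i * 3 + 0 + 1))) * (1 - X ^ (2 * k * (i * 3 + 1 + 1))) * (1 - X ^ (2 * k * (i * 3 + 2 + 1))))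
            * ((1 - X ^ (3 * k * (i * 2 + 0 + 1))) * (1 - X ^ (3 * k * (i * 2 + 1 + 1)))))"
      unfolding qpoch_blocks prod_lessThan_3 prod_lessThan_2 triple_prod_fin_def prod.distrib by simp
    also have "\<dots> = (\<Prod>i<n. ((1 - X ^ (k * (i * 6 + 0 + 1))) * (1 - X ^ (k * (i * 6 + 1 + 1))) * (1 - X ^ (k * (i * 6 + 2 + 1)))
            * (1 - X ^ (k * (i * 6 + 3 + 1))) * (1 - X ^ (k * (i * 6 + 4 + 1))) * (1 - X ^ (k * (i * 6 + 5 + 1))))
            * (1 - X ^ (6 * k * (i + 1))))"
    proof (rule prod.cong)
      fix i
      have ee: "6 * k * i + k = k * (i * 6 + 0 + 1)" "6 * k * i + 5 * k = k * (i * 6 + 4 + 1)"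
        "2 * k * (i * 3 + 0 + 1) = k * (i * 6 + 1 + 1)" "2 * k * (i * 3 + 1 + 1) = k * (i * 6 + 3 + 1)"
        "2 * k * (i * 3 + 2 + 1) = k * (i * 6 + 5 + 1) + k * 0" "3 * k * (i * 2 + 0 + 1) = k * (i * 6 + 2 + 1)"
        "3 * k * (i * 2 + 1 + 1) = k * (i * 6 + 5 + 1) + k * 0" "6 * k * (i + 1) = k * (i * 6 + 5 + 1) + k * 0"
        by (simp_all add: algebra_simps)
      show "((1 + fps_const (-1) * X ^ (6 * k * i + k)) * (1 + fps_const (-1) * X ^ (6 * k * i + 5 * k)))
            * ((1 - X ^ (2 * k * (i * 3 + 0 + 1))) * (1 - X ^ (2 * k * (i * 3 + 1 + 1))) * (1 - X ^ (2 * k * (i * 3 + 2 + 1))))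
            * ((1 - X ^ (3 * k * (i * 2 + 0 + 1))) * (1 - X ^ (3 * k * (i * 2 + 1 + 1))))
          = ((1 - X ^ (k * (i * 6 + 0 + 1))) * (1 - X ^ (k * (i * 6 + 1 + 1))) * (1 - X ^ (k * (i * 6 + 2 + 1)))
            * (1 - X ^ (k * (i * 6 + 3 + 1))) * (1 - X ^ (k * (i * 6 + 4 + 1))) * (1 - X ^ (k * (i * 6 + 5 + 1))))
            * (1 - X ^ (6 * k * (i + 1)))"
        unfolding ee fps_const_minus_one by (simp only: mult_zero_right add_0_right) (simp add: mult_ac)
    qed simp
    also have "\<dots> = qpoch k (n * 6) * qpoch (6 * k) n"
      unfolding qpoch_blocks prod_lessThan_6 by (simp add: prod.distrib qpoch_def)
    finally show ?thesis .
  qed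
  have c1: "fps_limit (triple_prod (6 * k) k (5 * k) (-1) * ell (2 * k) * ell (3 * k))
      (\<lambda>n. triple_prod_fin (6 * k) k (5 * k) (-1) n * qpoch (2 * k) (n * 3) * qpoch (3 * k) (n * 2))"
    by (intro fps_limit_mult triple_prod_limit[OF k6] fps_limit_subseq[OF ell_limit[OF k2]] fps_limit_subseq[OF ell_limit[OF k3]]) simp_all
  have c2: "fps_limit (ell k * ell (6 * k)) (\<lambda>n. qpoch k (n * 6) * qpoch (6 * k) n)"
    by (intro fps_limit_mult fps_limit_subseq[OF ell_limit[OF k]] ell_limit[OF k6]) simp
  show ?thesis using fps_limit_unique[OF c1[unfolded eq] c2] .
qed

lemma card_even_squares:
  assumes k: "k \<in> {1, 2}"
  shows "card {y::nat. 2 * k * y^2 = 24 * M + 8 * k} =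
         card {t. t < M + 2 \<and> 6 * k * tri t + k * t = M}
       + card {t. t < M + 2 \<and> 6 * k * tri (Suc t) + 5 * k * Suc t = M}"
proof -
  have kv: "v \<le> k * v" for v using k by auto
  have "card {y. (2 * k) * y^2 = 24 * M + (2 * k) * 2^2} =
         card {t. t < M + 2 \<and> 6 * k * tri t + k * t = M}
       + card {t. t < M + 2 \<and> 6 * k * tri (Suc t) + 5 * k * Suc t = M}"
  proof (intro card_squares_two_families)
    show "2 * k * (6 * v + 6 - 2)^2 = 24 * (6 * k * tri (Suc v) + k * Suc v) + 2 * k * 2^2" for v
      using arg_cong[OF sq_6_4[of v], of "\<lambda>x. 2 * k * x"] by (simp add: algebra_simps)
    show "2 * k * (6 * t + 6 + 2)^2 = 24 * (6 * k * tri (Suc t) + 5 * k * Suc t) + 2 * k * 2^2" for t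
      using arg_cong[OF sq_6_8[of t], of "\<lambda>x. 2 * k * x"] by (simp add: algebra_simps)
    show "y mod 6 = 2 \<or> y mod 6 = 6 - 2" if "2 * k * y^2 = 24 * M + 2 * k * 2^2" for y
      using even_pentagonal_residue[OF k, of y M] that by simp
    show "t \<le> 6 * k * tri t + k * t" for t
      using kv[of t] by linarith
    show "t \<le> 6 * k * tri (Suc t) + 5 * k * Suc t" for t
      using kv[of "Suc t"] by linarith
  qed simp_all
  then show ?thesis by simp
qed

lemma theta_6_mod2_sq24: "k \<in> {1, 2} \<Longrightarrow> fps_cong 2 (theta (6 * k) k (5 * k) 1) (sq24 (2 * k) (8 * k))"
  unfolding fps_cong_iff
proof
  fix M assume kk: "k \<in> {1, 2}"
  show "[theta (6 * k) k (5 * k) 1 $ M = sq24 (2 * k) (8 * k) $ M] (mod 2)"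
    using theta_mod2[of 1 "6 * k" k "5 * k" M] card_even_squares[OF kk, of M] by (simp add: sq24_def)
qed

lemma triple_prod_sign_mod2: "b \<ge> 1 \<Longrightarrow> fps_cong 2 (triple_prod b a c 1) (triple_prod b a c (-1))"
  unfolding triple_prod_def
proof (rule prodinf_fps_cong)
  assume b: "b \<ge> 1"
  show "admissible (\<lambda>i. (1 + fps_const 1 * X ^ (b * i + a)) * (1 + fps_const 1 * X ^ (b * i + c)))" by (rule admissible_triple_prod[OF b])
  show "admissible (\<lambda>i. (1 + fps_const (-1) * X ^ (b * i + a)) * (1 + fps_const (-1) * X ^ (b * i + c)))" by (rule admissible_triple_prod[OF b])
  fix j
  show "fps_cong 2 ((1 + fps_const 1 * X ^ (b * j + a)) * (1 + fps_const 1 * X ^ (b * j + c)))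
                ((1 + fps_const (-1) * X ^ (b * j + a)) * (1 + fps_const (-1) * X ^ (b * j + c)))"
    unfolding fps_const_minus_one by (simp add: fps_cong_mult fps_cong_plus_minus)
qed

lemma theta_6_mod2_ell: "k \<ge> 1 \<Longrightarrow> fps_cong 2 (theta (6 * k) k (5 * k) 1 * ell (2 * k) * ell (3 * k)) (ell (6 * k) * ell k * ell (6 * k))"
proof -
  assume k: "k \<ge> 1"
  have k6: "6 * k \<ge> 1" using k by simp
  have "theta (6 * k) k (5 * k) 1 = ell (6 * k) * triple_prod (6 * k) k (5 * k) 1" by (rule jacobi_triple_product[symmetric]) (use k in auto)
  moreover have "fps_cong 2 (ell (6 * k) * triple_prod (6 * k) k (5 * k) 1 * ell (2 * k) * ell (3 * k))
                         (ell (6 * k) * triple_prod (6 * k) k (5 * k) (-1) * ell (2 * k) * ell (3 * k))"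
    by (intro fps_cong_mult fps_cong_refl triple_prod_sign_mod2[OF k6])
  moreover have "ell (6 * k) * triple_prod (6 * k) k (5 * k) (-1) * ell (2 * k) * ell (3 * k) = ell (6 * k) * ell k * ell (6 * k)"
    using triple_prod_6_regroup[OF k] by (simp add: mult.assoc)
  ultimately show ?thesis by simp
qed

section \<open>The generating function of s modulo 16\<close>

definition signed_sq_series :: "nat \<Rightarrow> int \<Rightarrow> int fps" where
  "signed_sq_series a e = Abs_fps (\<lambda>D. \<Sum>t<D+2. if a * (Suc t)^2 = D then e ^ Suc t else 0)"

definition sq_series :: "nat \<Rightarrow> int fps" where
  "sq_series a = Abs_fps (\<lambda>D. int (card {m. a * (Suc m)^2 = D}))"

lemma Suc_le_mult_Suc_sq: "a \<ge> 1 \<Longrightarrow> Suc t \<le> a * (Suc t)^2"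
proof -
  assume a: "a \<ge> 1"
  have h1: "Suc t \<le> (Suc t)^2" by (simp add: power2_eq_square)
  have h2: "(Suc t)^2 \<le> a * (Suc t)^2" using mult_le_mono1[OF a, of "(Suc t)^2"] by simp
  show ?thesis using h1 h2 by linarith
qed

lemma theta_square:
  assumes a: "a \<ge> 1"
  shows "theta (2 * a) a a e = 1 + 2 * signed_sq_series a e"
proof (rule fps_ext)
  fix D
  define g where "g t = (if a * (Suc t)^2 = D then e ^ Suc t else 0)" for t
  have sq: "2 * a * tri t + a * t = a * t^2" for t
    using tri_twice[of t] by (simp add: power2_eq_square algebra_simps) (metis add_mult_distrib2 mult.assoc mult.left_commute)
  have ell_mult_self_mod2: "2 * a * tri (Suc t) + a * Suc t = a * (Suc t)^2" for t
    using sq[of "Suc t"] by simp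
  have gD: "g (D + 1) = 0" using Suc_le_mult_Suc_sq[OF a, of "D + 1"] by (auto simp: g_def)
  have s1: "(\<Sum>t<D+2. if 2 * a * tri t + a * t = D then e ^ t else 0) = (if D = 0 then 1 else 0) + (\<Sum>t<D+1. g t)"
  proof -
    have "(\<Sum>t<D+2. if 2 * a * tri t + a * t = D then e ^ t else 0) = (\<Sum>t<Suc (D+1). if a * t^2 = D then e ^ t else 0)"
      by (simp add: sq)
    also have "\<dots> = (if a * 0^2 = D then e ^ 0 else 0) + (\<Sum>t<D+1. g t)"
      unfolding sum.lessThan_Suc_shift g_def by simp
    finally show ?thesis by auto
  qed
  have s2: "(\<Sum>t<D+2. if 2 * a * tri (Suc t) + a * Suc t = D then e ^ Suc t else 0) = (\<Sum>t<D+1. g t)"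
  proof -
    have "(\<Sum>t<D+2. if 2 * a * tri (Suc t) + a * Suc t = D then e ^ Suc t else 0) = (\<Sum>t<Suc (D+1). g t)"
      unfolding g_def ell_mult_self_mod2 by simp
    also have "\<dots> = (\<Sum>t<D+1. g t)" using gD by simp
    finally show ?thesis .
  qed
  have y: "signed_sq_series a e $ D = (\<Sum>t<D+1. g t)"
  proof -
    have "signed_sq_series a e $ D = (\<Sum>t<Suc (D+1). g t)" by (simp add: signed_sq_series_def g_def)
    also have "\<dots> = (\<Sum>t<D+1. g t)" using gD by simp
    finally show ?thesis .
  qed
  have "theta (2 * a) a a e $ D = (if D = 0 then 1 else 0) + 2 * (\<Sum>t<D+1. g t)"
    unfolding theta_def fps_nth_Abs_fps s1 s2 by simp
  then show "theta (2 * a) a a e $ D = (1 + 2 * signed_sq_series a e) $ D"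
    by (simp add: y numeral_fps_const)
qed

lemma signed_sq_series_mod2:
  assumes a: "a \<ge> 1" and e: "odd e"
  shows "fps_cong 2 (signed_sq_series a e) (sq_series a)"
  unfolding fps_cong_iff
proof
  fix D
  have o: "[e ^ n = 1] (mod 2)" for n
    using e by (simp add: cong_def odd_iff_mod_2_eq_one[symmetric])
  have "[signed_sq_series a e $ D = (\<Sum>t<D+2. if a * (Suc t)^2 = D then 1 else 0)] (mod 2)"
    unfolding signed_sq_series_def fps_nth_Abs_fps by (rule cong_sum) (simp add: o del: power_Suc)
  also have "(\<Sum>t<D+2. if a * (Suc t)^2 = D then 1 else 0) = int (card {t. t < D + 2 \<and> a * (Suc t)^2 = D})"
    by (rule sum_indicator_card)
  also have "{t. t < D + 2 \<and> a * (Suc t)^2 = D} = {m. a * (Suc m)^2 = D}"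
  proof -
    have "a * (Suc m)^2 = D \<Longrightarrow> m < D + 2" for m using Suc_le_mult_Suc_sq[OF a, of m] by auto
    then show ?thesis by blast
  qed
  finally show "[signed_sq_series a e $ D = sq_series a $ D] (mod 2)" by (simp add: sq_series_def)
qed

lemma signed_sq_series_nth_0: "(\<And>m. a * (Suc m)^2 \<noteq> D) \<Longrightarrow> signed_sq_series a e $ D = 0"
  by (simp add: signed_sq_series_def)

definition even_fps :: "int fps \<Rightarrow> bool" where
  "even_fps f \<longleftrightarrow> (\<forall>n. odd n \<longrightarrow> f $ n = 0)"

lemma even_fps_add: "even_fps f \<Longrightarrow> even_fps g \<Longrightarrow> even_fps (f + g)"
  by (simp add: even_fps_def)

lemma even_fps_diff: "even_fps f \<Longrightarrow> even_fps g \<Longrightarrow> even_fps (f - g)"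
  by (simp add: even_fps_def)

lemma even_fps_mult: "even_fps f \<Longrightarrow> even_fps g \<Longrightarrow> even_fps (f * g)"
  unfolding even_fps_def
proof (intro allI impI)
  fix n :: nat assume f: "\<forall>n. odd n \<longrightarrow> f $ n = 0" and g: "\<forall>n. odd n \<longrightarrow> g $ n = 0" and n: "odd n"
  have "f $ i * g $ (n - i) = 0" if "i \<in> {0..n}" for i
  proof (cases "odd i")
    case True then show ?thesis using f by simp
  next
    case False
    then have "odd (n - i)" using n that by auto
    then show ?thesis using g by simp
  qed
  then have "(\<Sum>i=0..n. f $ i * g $ (n - i)) = 0" by (rule sum.neutral[OF ballI])
  then show "(f * g) $ n = 0" by (simp add: fps_mult_nth)
qed

lemma even_fps_1: "even_fps 1"
  by (simp add: even_fps_def)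

lemma even_fps_const_mult: "even_fps f \<Longrightarrow> even_fps (fps_const c * f)"
  by (simp add: even_fps_def)

lemma even_fps_power: "even_fps f \<Longrightarrow> even_fps (f ^ k)"
  by (induction k) (auto intro: even_fps_mult even_fps_1)

lemma even_fps_signed_sq_series: "even_fps (signed_sq_series 2 e)"
  unfolding even_fps_def
proof (intro allI impI)
  fix n :: nat assume n: "odd n"
  have "2 * (Suc t)^2 \<noteq> n" for t using n by auto
  then show "signed_sq_series 2 e $ n = 0" by (simp add: signed_sq_series_def)
qed

definition opart2 :: "int fps" where
  "opart2 = fps_prodinf (\<lambda>j. (1 + X ^ (2 * j + 2)) * geom_inv (2 * j + 2))"

definition phi3 :: "int fps" where
  "phi3 = fps_prodinf (\<lambda>j. (1 - X ^ (6 * j + 6)) * (1 + X ^ (6 * j + 3)) ^ 2)"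

definition neg_ell2 :: "int fps" where
  "neg_ell2 = fps_prodinf (\<lambda>j. 1 + X ^ (2 * j + 2))"

definition odd_ell2 :: "int fps" where
  "odd_ell2 = fps_prodinf (\<lambda>j. 1 - X ^ (4 * j + 2))"

lemma geom_inv_mult: "k \<ge> 1 \<Longrightarrow> geom_inv k * (1 - X ^ k) = 1"
proof (rule fps_ext)
  fix n assume k: "k \<ge> 1"
  have "(geom_inv k * (1 - X ^ k)) $ n = geom_inv k $ n - (if n < k then 0 else geom_inv k $ (n - k))"
    by (simp add: algebra_simps fps_X_power_mult_right_nth)
  also have "\<dots> = (if n = 0 then 1 else 0)"
  proof (cases "n < k")
    case True
    then show ?thesis using k by (auto simp: geom_inv_def dest: dvd_imp_le)
  next
    case False
    then have "k dvd n \<longleftrightarrow> k dvd (n - k)" by (simp add: dvd_minus_self)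
    then show ?thesis using False k by (auto simp: geom_inv_def)
  qed
  finally show "(geom_inv k * (1 - X ^ k)) $ n = 1 $ n" by simp
qed

lemma geom_inv_eq_below: "k \<ge> 1 \<Longrightarrow> eq_below k (geom_inv k) 1"
  by (auto simp: eq_below_iff geom_inv_def dest: dvd_imp_le)

lemma admissible_opart2: "admissible (\<lambda>j. (1 + X ^ (2 * j + 2)) * geom_inv (2 * j + 2))"
  unfolding admissible_def
proof
  fix j
  have "eq_below j (1 + 1 * X ^ (2 * j + 2)) 1" by (rule eq_below_1_plus_X_power) simp
  moreover have "eq_below j (geom_inv (2 * j + 2)) 1"
    by (rule eq_below_mono[OF geom_inv_eq_below]) auto
  ultimately show "eq_below j ((1 + X ^ (2 * j + 2)) * geom_inv (2 * j + 2)) 1"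
    using eq_below_1_mult by simp
qed

lemma admissible_phi3: "admissible (\<lambda>j. (1 - X ^ (6 * j + 6)) * (1 + X ^ (6 * j + 3)) ^ 2)"
proof -
  have "admissible (\<lambda>j. 1 - X ^ (6 * j + 6))" by (rule admissible_1_minus_X_power) simp
  moreover have "admissible (\<lambda>j. 1 + 1 * X ^ (6 * j + 3))" by (rule admissible_1_plus_X_power) simp
  ultimately show ?thesis using admissible_mult admissible_power by fastforce
qed

lemma admissible_neg_ell2: "admissible (\<lambda>j. 1 + X ^ (2 * j + 2))"
  using admissible_1_plus_X_power[of "\<lambda>j. 2 * j + 2" 1] by simp

lemma admissible_odd_ell2: "admissible (\<lambda>j. 1 - X ^ (4 * j + 2))"
  by (rule admissible_1_minus_X_power) simp

lemma s_gf_split: "s_gf = opart2 * phi3"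
proof -
  have "s_gf = fps_prodinf (\<lambda>j. ((1 + X ^ (2 * j + 2)) * geom_inv (2 * j + 2)) * ((1 - X ^ (6 * j + 6)) * (1 + X ^ (6 * j + 3)) ^ 2))"
    unfolding s_gf_def by (simp add: mult.assoc)
  also have "\<dots> = opart2 * phi3" unfolding opart2_def phi3_def by (rule prodinf_mult[OF admissible_opart2 admissible_phi3])
  finally show ?thesis .
qed

lemma phi3_theta: "phi3 = theta 6 3 3 1"
proof -
  have "phi3 = fps_prodinf (\<lambda>j. (1 - X ^ (6 * (j + 1))) * ((1 + fps_const 1 * X ^ (6 * j + 3)) * (1 + fps_const 1 * X ^ (6 * j + 3))))"
    unfolding phi3_def by (simp add: power2_eq_square algebra_simps)
  also have "\<dots> = ell 6 * triple_prod 6 3 3 1"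
    unfolding ell_def triple_prod_def by (rule prodinf_mult[OF admissible_ell admissible_triple_prod]) simp_all
  also have "\<dots> = theta 6 3 3 1" by (rule jacobi_triple_product) simp_all
  finally show ?thesis .
qed

lemma opart2_mult_ell2: "opart2 * ell 2 = neg_ell2"
proof -
  have "opart2 * ell 2 = fps_prodinf (\<lambda>j. ((1 + X ^ (2 * j + 2)) * geom_inv (2 * j + 2)) * (1 - X ^ (2 * (j + 1))))"
    unfolding opart2_def ell_def by (rule prodinf_mult[OF admissible_opart2 admissible_ell, symmetric]) simp
  also have "\<dots> = neg_ell2"
  proof -
    have "((1 + X ^ (2 * j + 2)) * geom_inv (2 * j + 2)) * (1 - X ^ (2 * (j + 1))) = 1 + X ^ (2 * j + 2)" for j
    proof -
      have g: "geom_inv (2 * j + 2) * (1 - X ^ (2 * j + 2)) = 1" by (rule geom_inv_mult) simp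
      have alg: "gg * (1 - y) = 1 \<Longrightarrow> ((1 + y) * gg) * (1 - y) = 1 + y" for gg y :: "int fps"
      proof -
        assume h: "gg * (1 - y) = 1"
        have "((1 + y) * gg) * (1 - y) = (1 + y) * (gg * (1 - y))" by (rule mult.assoc)
        also have "\<dots> = 1 + y" using h by simp
        finally show ?thesis .
      qed
      have e2: "2 * (j + 1) = 2 * j + 2" by simp
      show ?thesis unfolding e2 by (rule alg[OF g])
    qed
    then have "(\<lambda>j. ((1 + X ^ (2 * j + 2)) * geom_inv (2 * j + 2)) * (1 - X ^ (2 * (j + 1)))) = (\<lambda>j. 1 + X ^ (2 * j + 2))"
      by (rule ext)
    then show ?thesis unfolding neg_ell2_def by (simp only:)
  qed
  finally show ?thesis .
qed

lemma neg_ell2_mult_ell2: "neg_ell2 * ell 2 = ell 4"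
proof -
  have "neg_ell2 * ell 2 = fps_prodinf (\<lambda>j. (1 + X ^ (2 * j + 2)) * (1 - X ^ (2 * (j + 1))))"
    unfolding neg_ell2_def ell_def by (rule prodinf_mult[OF admissible_neg_ell2 admissible_ell, symmetric]) simp
  also have "\<dots> = ell 4"
  proof -
    have "(1 + X ^ (2 * j + 2)) * (1 - X ^ (2 * (j + 1))) = 1 - X ^ (4 * (j + 1))" for j
    proof -
      have e4: "4 * (j + 1) = (2 * j + 2) + (2 * j + 2)" by simp
      have e2: "2 * (j + 1) = 2 * j + 2" by simp
      have alg: "(1 + y) * (1 - y) = 1 - y * (y::int fps)" for y by (simp add: algebra_simps)
      show ?thesis unfolding e4 e2 power_add by (rule alg)
    qed
    then show ?thesis unfolding ell_def by simp
  qed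
  finally show ?thesis .
qed

lemma ell2_split: "ell 2 = odd_ell2 * ell 4"
proof -
  have eq: "qpoch 2 (n * 2) = (\<Prod>i<n. 1 - X ^ (4 * i + 2)) * qpoch 4 n" for n
  proof -
    have "qpoch 2 (n * 2) = (\<Prod>i<n. (1 - X ^ (2 * (i * 2 + 0 + 1))) * (1 - X ^ (2 * (i * 2 + 1 + 1))))"
      unfolding qpoch_blocks prod_lessThan_2 by simp
    also have "\<dots> = (\<Prod>i<n. (1 - X ^ (4 * i + 2)) * (1 - X ^ (4 * (i + 1))))"
    proof (rule prod.cong)
      fix i
      have ee: "2 * (i * 2 + 0 + 1) = 4 * i + (2::nat)" "2 * (i * 2 + 1 + 1) = 4 * (i + (1::nat))" by simp_all
      show "(1 - X ^ (2 * (i * 2 + 0 + 1))) * (1 - X ^ (2 * (i * 2 + 1 + 1))) = (1 - X ^ (4 * i + 2)) * (1 - X ^ (4 * (i + 1)))"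
        unfolding ee ..
    qed simp
    finally show ?thesis by (simp add: prod.distrib qpoch_def)
  qed
  have c1: "fps_limit (ell 2) (\<lambda>n. qpoch 2 (n * 2))" by (rule fps_limit_subseq[OF ell_limit]) simp_all
  have c2: "fps_limit (odd_ell2 * ell 4) (\<lambda>n. qpoch 2 (n * 2))"
    unfolding eq odd_ell2_def by (rule fps_limit_mult[OF admissible_limit[OF admissible_odd_ell2] ell_limit]) simp
  show ?thesis using fps_limit_unique[OF c1 c2] .
qed

lemma theta_4_2_2: "theta 4 2 2 (-1) = ell 4 * odd_ell2 ^ 2"
proof -
  have "triple_prod 4 2 2 (-1) = fps_prodinf (\<lambda>j. (1 - X ^ (4 * j + 2)) ^ 2)"
    unfolding triple_prod_def fps_const_minus_one by (simp add: power2_eq_square)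
  also have "\<dots> = odd_ell2 ^ 2" unfolding odd_ell2_def by (rule prodinf_power[OF admissible_odd_ell2])
  finally have "triple_prod 4 2 2 (-1) = odd_ell2 ^ 2" .
  moreover have "ell 4 * triple_prod 4 2 2 (-1) = theta 4 2 2 (-1)" by (rule jacobi_triple_product) simp_all
  ultimately show ?thesis by simp
qed

lemma opart2_mult_theta: "opart2 * theta 4 2 2 (-1) = 1"
proof -
  have e4: "ell 4 \<noteq> 0" by (rule ell_nonzero) simp
  have "neg_ell2 * odd_ell2 * ell 4 = 1 * ell 4" using neg_ell2_mult_ell2 ell2_split by (simp add: mult.assoc)
  then have po: "neg_ell2 * odd_ell2 = 1" using e4 by (metis mult_cancel_right)
  have "opart2 * odd_ell2 * ell 4 = neg_ell2" using opart2_mult_ell2 ell2_split by (simp add: mult.assoc)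
  then have "opart2 * theta 4 2 2 (-1) = neg_ell2 * odd_ell2" unfolding theta_4_2_2 by (simp add: power2_eq_square mult_ac)
  then show ?thesis using po by simp
qed

(* s_gf = phi(q^3) / phi(-q^2) with phi(q^3) = 1 + 2Z and phi(-q^2) = 1 + 2Y. Modulo 16,
   1 / (1 + 2Y) = 1 - 2Y + 4Y^2 - 8Y^3, and the part free of Z is an even series. *)

lemma s_mod16_expansion:
  assumes N: "odd N"
  shows "[s N = 2 * (signed_sq_series 3 1 $ N) - 4 * (signed_sq_series 3 1 * signed_sq_series 2 (-1)) $ N + 8 * (signed_sq_series 3 1 * signed_sq_series 2 (-1) ^ 2) $ N] (mod 16)"
proof -
  define Y where "Y = signed_sq_series 2 (-1)"
  define Z where "Z = signed_sq_series 3 1"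
  have AY: "opart2 * (1 + 2 * Y) = 1" using opart2_mult_theta theta_square[of 2 "-1"] by (simp add: Y_def)
  define P where "P = 1 - 2 * Y + 4 * Y^2 - 8 * Y^3"
  have PA: "opart2 = P + 16 * Y^4 * opart2"
  proof -
    have "P * (1 + 2 * Y) + 16 * Y^4 = 1" by (simp add: P_def algebra_simps power2_eq_square power3_eq_cube power4_eq_xxxx)
    then have "opart2 = opart2 * (P * (1 + 2 * Y) + 16 * Y^4)" by simp
    also have "\<dots> = P * (opart2 * (1 + 2 * Y)) + 16 * Y^4 * opart2" by (simp add: algebra_simps)
    finally show ?thesis using AY by simp
  qed
  have sg: "s_gf = opart2 * (1 + 2 * Z)" unfolding s_gf_split phi3_theta theta_square[of 3 1, simplified] Z_def by simp
  define W where "W = - (Z * Y^3) + Y^4 * opart2 * (1 + 2 * Z)"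
  have eq: "s_gf = P + 2 * Z - 4 * (Z * Y) + 8 * (Z * Y^2) + 16 * W"
    unfolding sg W_def by (subst PA) (simp add: P_def algebra_simps power2_eq_square power3_eq_cube)
  have P0: "P $ N = 0"
  proof -
    have "even_fps Y" unfolding Y_def by (rule even_fps_signed_sq_series)
    then have "even_fps P" unfolding P_def numeral_fps_const
      by (intro even_fps_diff even_fps_add even_fps_1 even_fps_const_mult even_fps_power)
    then show ?thesis using N by (simp add: even_fps_def)
  qed
  have "s N = (P + 2 * Z - 4 * (Z * Y) + 8 * (Z * Y^2) + 16 * W) $ N"
    unfolding s_def by (simp only: eq)
  also have "\<dots> = 2 * Z $ N - 4 * (Z * Y) $ N + 8 * (Z * Y^2) $ N + 16 * W $ N"
    unfolding numeral_fps_const by (simp add: P0 fps_mult_left_const_nth)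
  finally have "s N = 2 * Z $ N - 4 * (Z * Y) $ N + 8 * (Z * Y^2) $ N + 16 * W $ N" .
  then show ?thesis unfolding Y_def[symmetric] Z_def[symmetric]
    by (simp add: cong_iff_dvd_diff)
qed

section \<open>Counting representations by binary quadratic forms\<close>

lemma card_mult_fps_nth:
  assumes fa: "\<And>i. finite (A i)" and fb: "\<And>j. finite (B j)"
    and dA: "\<And>x i i'. x \<in> A i \<Longrightarrow> x \<in> A i' \<Longrightarrow> i = i'"
  shows "(Abs_fps (\<lambda>i. int (card (A i))) * Abs_fps (\<lambda>j. int (card (B j)))) $ n
       = int (card {(x, y). \<exists>i\<le>n. x \<in> A i \<and> y \<in> B (n - i)})"
proof -
  have "(Abs_fps (\<lambda>i. int (card (A i))) * Abs_fps (\<lambda>j. int (card (B j)))) $ n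
      = (\<Sum>i=0..n. int (card (A i)) * int (card (B (n - i))))"
    by (simp add: fps_mult_nth)
  also have "\<dots> = int (\<Sum>i\<in>{0..n}. card (A i \<times> B (n - i)))"
    by (simp add: card_cartesian_product)
  also have "(\<Sum>i\<in>{0..n}. card (A i \<times> B (n - i))) = card (\<Union>i\<in>{0..n}. A i \<times> B (n - i))"
    by (rule card_UN_disjoint[symmetric]) (use fa fb dA in auto)
  also have "(\<Union>i\<in>{0..n}. A i \<times> B (n - i)) = {(x, y). \<exists>i\<le>n. x \<in> A i \<and> y \<in> B (n - i)}"
    by auto
  finally show ?thesis .
qed

lemma finite_Suc_sq: "a \<ge> 1 \<Longrightarrow> finite {m. a * (Suc m)^2 = D}"
proof -
  assume a: "a \<ge> 1"
  have "a * (Suc m)^2 = D \<Longrightarrow> m < D + 2" for m using Suc_le_mult_Suc_sq[OF a, of m] by auto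
  then have "{m. a * (Suc m)^2 = D} \<subseteq> {..<D+2}" by blast
  then show ?thesis by (rule finite_subset) simp
qed

lemma sq_series_mult_nth:
  assumes "a \<ge> 1" "b \<ge> 1"
  shows "(sq_series a * sq_series b) $ N = int (card {(m, k). a * (Suc m)^2 + b * (Suc k)^2 = N})"
proof -
  have "(sq_series a * sq_series b) $ N = int (card {(m, k). \<exists>i\<le>N. m \<in> {m. a * (Suc m)^2 = i} \<and> k \<in> {m. b * (Suc m)^2 = N - i}})"
    unfolding sq_series_def by (rule card_mult_fps_nth) (use assms finite_Suc_sq in auto)
  also have "{(m, k). \<exists>i\<le>N. m \<in> {m. a * (Suc m)^2 = i} \<and> k \<in> {m. b * (Suc m)^2 = N - i}}
           = {(m, k). a * (Suc m)^2 + b * (Suc k)^2 = N}"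
    by auto
  finally show ?thesis .
qed

lemma sq24_mult_nth:
  assumes "a \<ge> 1" "b \<ge> 1"
  shows "(sq24 a c * sq24 b d) $ n = int (card {(x, y). \<exists>i\<le>n. a * x^2 = 24 * i + c \<and> b * y^2 = 24 * (n - i) + d})"
proof -
  have "(sq24 a c * sq24 b d) $ n = int (card {(x, y). \<exists>i\<le>n. x \<in> {x. a * x^2 = 24 * i + c} \<and> y \<in> {y. b * y^2 = 24 * (n - i) + d}})"
    unfolding sq24_def by (rule card_mult_fps_nth) (use assms finite_sq in auto)
  then show ?thesis by simp
qed

lemma card_symmetric_parity:
  assumes "finite S" "\<And>x y. (x, y) \<in> S \<Longrightarrow> (y, x) \<in> S"
  shows "\<exists>k. card S = card (S \<inter> {p. fst p = snd p}) + 2 * k"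
  using assms
proof (induction "card S" arbitrary: S rule: less_induct)
  case less
  show ?case
  proof (cases "S \<subseteq> {p. fst p = snd p}")
    case True
    then have "S \<inter> {p. fst p = snd p} = S" by auto
    then show ?thesis by (intro exI[of _ 0]) simp
  next
    case False
    then obtain pp where pp: "pp \<in> S" "fst pp \<noteq> snd pp" by blast
    obtain x y where "pp = (x, y)" by (cases pp)
    then have xy: "(x, y) \<in> S" "x \<noteq> y" using pp by auto
    then have yx: "(y, x) \<in> S" using less.prems by blast
    define S' where "S' = S - {(x, y), (y, x)}"
    have cS: "card S = card S' + 2"
    proof -
      have "card S' = card S - card {(x, y), (y, x)}"
        unfolding S'_def by (rule card_Diff_subset) (use xy yx less.prems in auto)
      moreover have "card {(x, y), (y, x)} = 2" using xy by auto
      moreover have "card {(x, y), (y, x)} \<le> card S"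
        by (rule card_mono) (use xy yx less.prems in auto)
      ultimately show ?thesis by simp
    qed
    have fS': "finite S'" using less.prems by (simp add: S'_def)
    have sS': "(b, a) \<in> S'" if "(a, b) \<in> S'" for a b using that less.prems by (auto simp: S'_def)
    obtain k where k: "card S' = card (S' \<inter> {p. fst p = snd p}) + 2 * k"
      using less.hyps[of S'] cS fS' sS' by auto
    have "S' \<inter> {p. fst p = snd p} = S \<inter> {p. fst p = snd p}" using xy by (auto simp: S'_def)
    then show ?thesis using k cS by (intro exI[of _ "k + 1"]) simp
  qed
qed

lemma sq_series_square_mod2:
  assumes a: "a \<ge> 1"
  shows "fps_cong 2 (sq_series a ^ 2) (sq_series (2 * a))"
  unfolding fps_cong_iff
proof
  fix N
  define S where "S = {(m, k). a * (Suc m)^2 + a * (Suc k)^2 = N}"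
  have fS: "finite S"
  proof -
    have "S \<subseteq> {m. a * (Suc m)^2 \<le> N} \<times> {m. a * (Suc m)^2 \<le> N}" by (auto simp: S_def)
    moreover have "{m. a * (Suc m)^2 \<le> N} \<subseteq> {..N}"
    proof -
      have "a * (Suc m)^2 \<le> N \<Longrightarrow> m \<le> N" for m using Suc_le_mult_Suc_sq[OF a, of m] by auto
      then show ?thesis by blast
    qed
    ultimately show ?thesis by (meson finite_SigmaI finite_atMost finite_subset)
  qed
  obtain k where k: "card S = card (S \<inter> {p. fst p = snd p}) + 2 * k"
    using card_symmetric_parity[OF fS] by (auto simp: S_def add.commute)
  have "card (S \<inter> {p. fst p = snd p}) = card ((\<lambda>m. (m, m)) ` {m. 2 * a * (Suc m)^2 = N})"
  proof -
    have "S \<inter> {p. fst p = snd p} = (\<lambda>m. (m, m)) ` {m. 2 * a * (Suc m)^2 = N}"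
      by (auto simp: S_def)
    then show ?thesis by simp
  qed
  also have "\<dots> = card {m. 2 * a * (Suc m)^2 = N}" by (rule card_image) (auto simp: inj_on_def)
  finally have "card S = card {m. 2 * a * (Suc m)^2 = N} + 2 * k" using k by simp
  moreover have "(sq_series a ^ 2) $ N = int (card S)"
  proof -
    have "sq_series a ^ 2 = sq_series a * sq_series a" by (simp add: power2_eq_square)
    then show ?thesis unfolding S_def using sq_series_mult_nth[OF a a, of N] by simp
  qed
  ultimately show "[(sq_series a ^ 2) $ N = sq_series (2 * a) $ N] (mod 2)"
    by (simp add: sq_series_def cong_iff_dvd_diff)
qed

lemma odd_sq_eq_tri: "(2 * i + 1)^2 = 8 * tri (Suc i) + 1"
  using tri_twice[of "Suc i"] unfolding power2_eq_square by (simp add: algebra_simps del: tri.simps; linarith)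

lemma sq24_triple_solutions:
  assumes k: "k \<ge> 1" and not4: "\<not> 4 dvd 3 * k"
  shows "3 * k * y^2 = 24 * M + 3 * k \<longleftrightarrow> (\<exists>i. y = 2 * i + 1 \<and> M = k * tri (Suc i))"
proof
  assume y: "3 * k * y^2 = 24 * M + 3 * k"
  show "\<exists>i. y = 2 * i + 1 \<and> M = k * tri (Suc i)"
  proof (cases "even y")
    case True
    then obtain z where "y = 2 * z" by blast
    then have "3 * k = 4 * (3 * k * z^2) - 4 * (6 * M)" using y by (simp add: power2_eq_square algebra_simps)
    then have "4 dvd 3 * k" by (metis dvd_diff_nat dvd_triv_left)
    then show ?thesis using not4 by simp
  next
    case False
    then obtain i where i: "y = 2 * i + 1" by (metis oddE)
    then have "24 * (k * tri (Suc i)) + 3 * k = 24 * M + 3 * k"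
      using y odd_sq_eq_tri[of i] by (simp add: algebra_simps)
    then show ?thesis using i by auto
  qed
next
  assume "\<exists>i. y = 2 * i + 1 \<and> M = k * tri (Suc i)"
  then obtain i where y: "y = 2 * i + 1" and M: "M = k * tri (Suc i)" by blast
  have "3 * k * y^2 = 3 * k * (8 * tri (Suc i) + 1)" unfolding y odd_sq_eq_tri ..
  then show "3 * k * y^2 = 24 * M + 3 * k" unfolding M by (simp add: algebra_simps)
qed

lemma psi_eq_sq24:
  assumes k: "k \<in> {1, 2, 3, 6}"
  shows "psi k = sq24 (3 * k) (3 * k)"
proof (rule fps_ext)
  fix M
  have k1: "k \<ge> 1" and not4: "\<not> 4 dvd 3 * k" using k by auto
  note solutions = sq24_triple_solutions[OF k1 not4]
  have "psi k $ M = (if \<exists>i. M = k * tri (Suc i) then 1 else 0)"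
    unfolding psi_def fps_nth_Abs_fps by (simp only: tri_Suc_div)
  moreover have "{y. 3 * k * y^2 = 24 * M + 3 * k} = {2 * i + 1}" if i: "M = k * tri (Suc i)" for i
  proof (intro equalityI subsetI)
    fix y assume "y \<in> {y. 3 * k * y^2 = 24 * M + 3 * k}"
    moreover have "3 * k * (2 * i + 1)^2 = 24 * M + 3 * k" using solutions[of "2 * i + 1" M] i by blast
    ultimately have "3 * k * y^2 = 3 * k * (2 * i + 1)^2" by simp
    then have "y^2 = (2 * i + 1)^2" using k1 by simp
    then show "y \<in> {2 * i + 1}" using power2_eq_iff_nonneg by blast
  qed (use solutions i in auto)
  moreover have "{y. 3 * k * y^2 = 24 * M + 3 * k} = {}" if "\<not> (\<exists>i. M = k * tri (Suc i))"
    using solutions that by auto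
  ultimately show "psi k $ M = sq24 (3 * k) (3 * k) $ M"
    by (cases "\<exists>i. M = k * tri (Suc i)") (auto simp: sq24_def)
qed

lemma sq24_split_residues:
  fixes a b c d n :: nat
  assumes H: "\<And>u v. u < 12 \<Longrightarrow> v < 12 \<Longrightarrow> (a * u^2 + b * v^2) mod 24 = (c + d) mod 24 \<Longrightarrow> (a * u^2) mod 24 = c"
    and d: "d < 24"
  shows "{(x, y). \<exists>i\<le>n. a * x^2 = 24 * i + c \<and> b * y^2 = 24 * (n - i) + d} = {(x, y). a * x^2 + b * y^2 = 24 * n + (c + d)}"
proof (intro equalityI subsetI)
  fix p assume "p \<in> {(x, y). \<exists>i\<le>n. a * x^2 = 24 * i + c \<and> b * y^2 = 24 * (n - i) + d}"
  then obtain x y i where p: "p = (x, y)" "i \<le> n" "a * x^2 = 24 * i + c" "b * y^2 = 24 * (n - i) + d" by auto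
  then have "a * x^2 + b * y^2 = 24 * (i + (n - i)) + (c + d)" by simp
  then show "p \<in> {(x, y). a * x^2 + b * y^2 = 24 * n + (c + d)}" using p by simp
next
  fix p assume "p \<in> {(x, y). a * x^2 + b * y^2 = 24 * n + (c + d)}"
  then obtain x y where p: "p = (x, y)" and eq: "a * x^2 + b * y^2 = 24 * n + (c + d)" by auto
  have "(a * (x mod 12)^2 + b * (y mod 12)^2) mod 24 = (a * x^2 + b * y^2) mod 24"
    by (metis mult_sq_mod24_mod12 mod_add_eq)
  also have "\<dots> = (c + d) mod 24" unfolding eq by simp
  finally have "(a * (x mod 12)^2) mod 24 = c" by (intro H) simp_all
  then have "(a * x^2) mod 24 = c" using mult_sq_mod24_mod12[of a x] by simp
  then obtain i where i: "a * x^2 = 24 * i + c" by (metis div_mult_mod_eq mult.commute add.commute)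
  have s1: "24 * i + c + b * y^2 = 24 * n + (c + d)" using eq i by simp
  then have iN: "i \<le> n" using d by linarith
  then obtain j where j: "n = i + j" using le_Suc_ex by blast
  have "b * y^2 = 24 * (n - i) + d" using s1 unfolding j by simp
  then show "p \<in> {(x, y). \<exists>i\<le>n. a * x^2 = 24 * i + c \<and> b * y^2 = 24 * (n - i) + d}"
    using p i iN by auto
qed

lemma residues_3_2_5: "u < 12 \<Longrightarrow> v < 12 \<Longrightarrow> (3 * u^2 + 2 * v^2) mod 24 = (3 + 2) mod 24 \<Longrightarrow> (3 * (u::nat)^2) mod 24 = 3"
  using nat_less_12_cases[of u] nat_less_12_cases[of v] by auto

lemma residues_3_2_11: "u < 12 \<Longrightarrow> v < 12 \<Longrightarrow> (3 * u^2 + 2 * v^2) mod 24 = (3 + 8) mod 24 \<Longrightarrow> (3 * (u::nat)^2) mod 24 = 3"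
  using nat_less_12_cases[of u] nat_less_12_cases[of v] by auto

lemma residues_3_4_7: "u < 12 \<Longrightarrow> v < 12 \<Longrightarrow> (3 * u^2 + 4 * v^2) mod 24 = (3 + 4) mod 24 \<Longrightarrow> (3 * (u::nat)^2) mod 24 = 3"
  using nat_less_12_cases[of u] nat_less_12_cases[of v] by auto

lemma residues_3_4_19: "u < 12 \<Longrightarrow> v < 12 \<Longrightarrow> (3 * u^2 + 4 * v^2) mod 24 = (3 + 16) mod 24 \<Longrightarrow> (3 * (u::nat)^2) mod 24 = 3"
  using nat_less_12_cases[of u] nat_less_12_cases[of v] by auto

lemma residues_1_4_5: "u < 12 \<Longrightarrow> v < 12 \<Longrightarrow> (1 * u^2 + 4 * v^2) mod 24 = (1 + 4) mod 24 \<Longrightarrow> (1 * (u::nat)^2) mod 24 = 1"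
  using nat_less_12_cases[of u] nat_less_12_cases[of v] by auto

lemma residues_2_9_11: "u < 12 \<Longrightarrow> v < 12 \<Longrightarrow> (2 * u^2 + 9 * v^2) mod 24 = (2 + 9) mod 24 \<Longrightarrow> (2 * (u::nat)^2) mod 24 = 2"
  using nat_less_12_cases[of u] nat_less_12_cases[of v] by auto

lemma residues_1_6_7: "u < 12 \<Longrightarrow> v < 12 \<Longrightarrow> (1 * u^2 + 6 * v^2) mod 24 = (1 + 6) mod 24 \<Longrightarrow> (1 * (u::nat)^2) mod 24 = 1"
  using nat_less_12_cases[of u] nat_less_12_cases[of v] by auto

lemma residues_1_18_19: "u < 12 \<Longrightarrow> v < 12 \<Longrightarrow> (1 * u^2 + 18 * v^2) mod 24 = (1 + 18) mod 24 \<Longrightarrow> (1 * (u::nat)^2) mod 24 = 1"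
  using nat_less_12_cases[of u] nat_less_12_cases[of v] by auto

definition rep :: "nat \<Rightarrow> nat \<Rightarrow> nat \<Rightarrow> nat" where
  "rep a b N = card {(x, y). a * x^2 + b * y^2 = N}"

lemma rep_prime_sq_mult:
  assumes p: "p > 0" and D: "\<And>x y. p dvd a * x^2 + b * y^2 \<Longrightarrow> p dvd x \<and> p dvd y"
  shows "rep a b (p^2 * M) = rep a b M"
proof -
  define f where "f = (\<lambda>(x::nat, y::nat). (p * x, p * y))"
  have inj: "inj f" unfolding f_def inj_def using p by auto
  have img: "f ` {(x, y). a * x^2 + b * y^2 = M} = {(x, y). a * x^2 + b * y^2 = p^2 * M}"
  proof (intro equalityI subsetI)
    fix q assume "q \<in> f ` {(x, y). a * x^2 + b * y^2 = M}"
    then obtain x y where q: "q = (p * x, p * y)" "a * x^2 + b * y^2 = M" by (auto simp: f_def)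
    have "a * (p * x)^2 + b * (p * y)^2 = p^2 * (a * x^2 + b * y^2)" by (simp add: power_mult_distrib algebra_simps)
    then have "a * (p * x)^2 + b * (p * y)^2 = p^2 * M" using q(2) by simp
    then show "q \<in> {(x, y). a * x^2 + b * y^2 = p^2 * M}" using q by simp
  next
    fix q assume "q \<in> {(x, y). a * x^2 + b * y^2 = p^2 * M}"
    then obtain x y where q: "q = (x, y)" and e: "a * x^2 + b * y^2 = p^2 * M" by auto
    then have "p dvd a * x^2 + b * y^2" by simp
    then obtain x' y' where x: "x = p * x'" and y: "y = p * y'" using D by (meson dvdE)
    have "p^2 * (a * x'^2 + b * y'^2) = p^2 * M" using e unfolding x y by (simp add: power_mult_distrib algebra_simps)
    then have "a * x'^2 + b * y'^2 = M" using p by simp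
    then show "q \<in> f ` {(x, y). a * x^2 + b * y^2 = M}" unfolding q x y f_def by force
  qed
  show ?thesis unfolding rep_def img[symmetric] by (rule card_image[OF inj_on_subset[OF inj]]) simp
qed

lemma rep_prime_mult_eq_0:
  assumes p: "p > 0" and D: "\<And>x y. p dvd a * x^2 + b * y^2 \<Longrightarrow> p dvd x \<and> p dvd y"
    and M: "\<not> p dvd M"
  shows "rep a b (p * M) = 0"
proof -
  have "{(x, y). a * x^2 + b * y^2 = p * M} = {}"
  proof (rule ccontr)
    assume "{(x, y). a * x^2 + b * y^2 = p * M} \<noteq> {}"
    then obtain x y where e: "a * x^2 + b * y^2 = p * M" by auto
    then have "p dvd a * x^2 + b * y^2" by simp
    then obtain x' y' where x: "x = p * x'" and y: "y = p * y'" using D by (meson dvdE)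
    have "p * (p * (a * x'^2 + b * y'^2)) = p * M" using e unfolding x y by (simp add: power_mult_distrib algebra_simps power2_eq_square)
    then have "p * (a * x'^2 + b * y'^2) = M" using p by simp
    then show False using M by (metis dvd_triv_left)
  qed
  then show ?thesis by (simp add: rep_def)
qed

lemma rep_prime_pow_mult:
  assumes p: "p > 0" and D: "\<And>x y. p dvd a * x^2 + b * y^2 \<Longrightarrow> p dvd x \<and> p dvd y"
  shows "rep a b (p ^ (2 * k) * M) = rep a b M"
proof (induction k)
  case 0 then show ?case by simp
next
  case (Suc k)
  have eq: "p ^ (2 * Suc k) * M = p^2 * (p ^ (2 * k) * M)" by (simp add: power_add power2_eq_square mult_ac)
  have "rep a b (p ^ (2 * Suc k) * M) = rep a b (p^2 * (p ^ (2 * k) * M))" by (simp only: eq)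
  also have "\<dots> = rep a b (p ^ (2 * k) * M)" by (rule rep_prime_sq_mult[OF p D])
  also have "\<dots> = rep a b M" by (rule Suc.IH)
  finally show ?case .
qed

lemma Legendre_nonres_dvd:
  assumes p: "prime (p::nat)" and L: "Legendre D (int p) = -1" and c: "[u^2 = D * v^2] (mod int p)"
  shows "int p dvd v"
proof (rule ccontr)
  assume nd: "\<not> int p dvd v"
  have pi: "prime (int p)" using p by simp
  have "coprime (int p) v" using prime_imp_coprime[OF pi nd] .
  then have "coprime v (int p)" by (simp add: coprime_commute)
  then obtain w where w: "[v * w = 1] (mod int p)" using cong_solve_coprime_int by blast
  have "[(u * w)^2 = D * (v * w)^2] (mod int p)"
    using cong_mult[OF c cong_refl[of "w^2"]] by (simp add: power_mult_distrib mult_ac)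
  moreover have "[D * (v * w)^2 = D * 1^2] (mod int p)"
    by (intro cong_mult cong_refl cong_pow w)
  ultimately have "[(u * w)^2 = D] (mod int p)" using cong_trans by fastforce
  then have "QuadRes (int p) D" unfolding QuadRes_def by blast
  then have "Legendre D (int p) \<noteq> -1" unfolding Legendre_def by auto
  then show False using L by simp
qed

lemma prime_ge5_not_dvd_2_3:
  assumes p: "prime (p::nat)" "p \<ge> 5"
  shows "\<not> p dvd 2" "\<not> p dvd 3" "\<not> (int p) dvd 2" "\<not> (int p) dvd 3"
proof -
  show "\<not> p dvd 2" using assms by (auto dest: dvd_imp_le)
  show "\<not> p dvd 3" using assms by (auto dest: dvd_imp_le)
  then show "\<not> (int p) dvd 3" by (metis int_dvd_int_iff of_nat_numeral)
  show "\<not> (int p) dvd 2" using \<open>\<not> p dvd 2\<close> by (metis int_dvd_int_iff of_nat_numeral)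
qed

lemma dvd_form_int: "p dvd a * x^2 + b * y^2 \<Longrightarrow> int p dvd int a * int x^2 + int b * int y^2"
proof -
  assume "p dvd a * x^2 + b * y^2"
  then have "int p dvd int (a * x^2 + b * y^2)" by (simp only: int_dvd_int_iff)
  then show ?thesis by simp
qed

lemma form_prime_dvd:
  assumes p: "prime p" and L: "Legendre D (int p) = -1"
    and h: "int p dvd int a * int x^2 + int b * int y^2"
    and c: "[(m * int x)^2 = D * (n * int y)^2] (mod int p)"
    and nm: "\<not> int p dvd m" and nn: "\<not> int p dvd n" and na: "\<not> int p dvd int a"
  shows "p dvd x \<and> p dvd y"
proof -
  have pi: "prime (int p)" using p by simp
  have "int p dvd n * int y" by (rule Legendre_nonres_dvd[OF p L c])
  then have py: "int p dvd int y" using nn pi by (simp add: prime_dvd_mult_iff)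
  then have "int p dvd int b * int y^2" by (simp add: power2_eq_square)
  then have "int p dvd int a * int x^2" using h by (simp add: dvd_add_left_iff)
  then have "int p dvd int x^2" using na pi by (simp add: prime_dvd_mult_iff)
  then have "int p dvd int x" using pi prime_dvd_power by blast
  then show ?thesis using py by (simp only: int_dvd_int_iff)
qed

lemma form_1_4_prime_dvd:
  assumes p: "prime p" "p \<ge> 5" and L: "Legendre (-1) (int p) = -1"
  shows "p dvd 1 * x^2 + 4 * y^2 \<Longrightarrow> p dvd x \<and> p dvd y"
proof -
  assume h: "p dvd 1 * x^2 + 4 * y^2"
  have h': "int p dvd int 1 * int x^2 + int 4 * int y^2" using dvd_form_int[OF h] .
  have e: "(1 * int x)^2 - (-1) * (2 * int y)^2 = int 1 * int x^2 + int 4 * int y^2"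
    by (simp add: power_mult_distrib)
  have c: "[(1 * int x)^2 = (-1) * (2 * int y)^2] (mod int p)"
    unfolding cong_iff_dvd_diff e by (rule h')
  show ?thesis by (rule form_prime_dvd[OF p(1) L h' c]) (use prime_ge5_not_dvd_2_3[OF p] p in \<open>auto simp: prime_int_iff\<close>)
qed

lemma form_2_9_prime_dvd:
  assumes p: "prime p" "p \<ge> 5" and L: "Legendre (-2) (int p) = -1"
  shows "p dvd 2 * x^2 + 9 * y^2 \<Longrightarrow> p dvd x \<and> p dvd y"
proof -
  assume h: "p dvd 2 * x^2 + 9 * y^2"
  have h': "int p dvd int 2 * int x^2 + int 9 * int y^2" using dvd_form_int[OF h] .
  have e: "(2 * int x)^2 - (-2) * (3 * int y)^2 = 2 * (int 2 * int x^2 + int 9 * int y^2)"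
    by (simp add: power_mult_distrib)
  have c: "[(2 * int x)^2 = (-2) * (3 * int y)^2] (mod int p)"
    unfolding cong_iff_dvd_diff e by (rule dvd_mult[OF h'])
  show ?thesis by (rule form_prime_dvd[OF p(1) L h' c]) (use prime_ge5_not_dvd_2_3[OF p] in auto)
qed

lemma form_1_6_prime_dvd:
  assumes p: "prime p" "p \<ge> 5" and L: "Legendre (-6) (int p) = -1"
  shows "p dvd 1 * x^2 + 6 * y^2 \<Longrightarrow> p dvd x \<and> p dvd y"
proof -
  assume h: "p dvd 1 * x^2 + 6 * y^2"
  have h': "int p dvd int 1 * int x^2 + int 6 * int y^2" using dvd_form_int[OF h] .
  have e: "(1 * int x)^2 - (-6) * (1 * int y)^2 = int 1 * int x^2 + int 6 * int y^2"
    by (simp add: power_mult_distrib)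
  have c: "[(1 * int x)^2 = (-6) * (1 * int y)^2] (mod int p)"
    unfolding cong_iff_dvd_diff e by (rule h')
  show ?thesis by (rule form_prime_dvd[OF p(1) L h' c]) (use prime_ge5_not_dvd_2_3[OF p] p in \<open>auto simp: prime_int_iff\<close>)
qed

lemma form_1_18_prime_dvd:
  assumes p: "prime p" "p \<ge> 5" and L: "Legendre (-18) (int p) = -1"
  shows "p dvd 1 * x^2 + 18 * y^2 \<Longrightarrow> p dvd x \<and> p dvd y"
proof -
  assume h: "p dvd 1 * x^2 + 18 * y^2"
  have h': "int p dvd int 1 * int x^2 + int 18 * int y^2" using dvd_form_int[OF h] .
  have e: "(1 * int x)^2 - (-18) * (1 * int y)^2 = int 1 * int x^2 + int 18 * int y^2"
    by (simp add: power_mult_distrib)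
  have c: "[(1 * int x)^2 = (-18) * (1 * int y)^2] (mod int p)"
    unfolding cong_iff_dvd_diff e by (rule h')
  show ?thesis by (rule form_prime_dvd[OF p(1) L h' c]) (use prime_ge5_not_dvd_2_3[OF p] p in \<open>auto simp: prime_int_iff\<close>)
qed

lemma coprime6_sq_mod24: "(r::nat) < 12 \<Longrightarrow> r mod 2 \<noteq> 0 \<Longrightarrow> r mod 3 \<noteq> 0 \<Longrightarrow> r^2 mod 24 = 1"
  using nat_less_12_cases[of r] by auto

lemma prime_sq_mod24:
  assumes p: "prime (p::nat)" "p \<ge> 5"
  shows "(p^2) mod 24 = 1"
proof -
  have n2: "\<not> 2 dvd p" and n3: "\<not> 3 dvd p"
  proof -
    show "\<not> 2 dvd p"
    proof
      assume "2 dvd p" then have "2 = (1::nat) \<or> 2 = p" using p(1) unfolding prime_nat_iff by blast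
      then show False using p by simp
    qed
    show "\<not> 3 dvd p"
    proof
      assume "3 dvd p" then have "3 = (1::nat) \<or> 3 = p" using p(1) unfolding prime_nat_iff by blast
      then show False using p by simp
    qed
  qed
  have r: "p mod 12 < 12" by simp
  have "(p mod 12) mod 2 = p mod 2" "(p mod 12) mod 3 = p mod 3" by (simp_all add: mod_mod_cancel)
  moreover have "p mod 2 \<noteq> 0" using n2 by (metis dvd_eq_mod_eq_0)
  moreover have "p mod 3 \<noteq> 0" using n3 by (metis dvd_eq_mod_eq_0)
  ultimately have "((p mod 12)^2) mod 24 = 1" using coprime6_sq_mod24[OF r] by simp
  then show ?thesis using sq_mod24_mod12[of p] by simp
qed

lemma three_sq_mod24: "(3 * (y::nat)^2) mod 24 = 0 \<or> (3 * y^2) mod 24 = 3 \<or> (3 * y^2) mod 24 = 12"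
proof -
  have r: "y mod 12 < 12" by simp
  have "(3 * (y mod 12)^2) mod 24 = 0 \<or> (3 * (y mod 12)^2) mod 24 = 3 \<or> (3 * (y mod 12)^2) mod 24 = 12"
    using nat_less_12_cases[OF r] by auto
  then show ?thesis using mult_sq_mod24_mod12[of 3 y] by simp
qed

lemma two_sq_mod24: "(2 * (y::nat)^2) mod 24 = 0 \<or> (2 * y^2) mod 24 = 2 \<or> (2 * y^2) mod 24 = 8 \<or> (2 * y^2) mod 24 = 18"
proof -
  have r: "y mod 12 < 12" by simp
  have "(2 * (y mod 12)^2) mod 24 = 0 \<or> (2 * (y mod 12)^2) mod 24 = 2 \<or> (2 * (y mod 12)^2) mod 24 = 8 \<or> (2 * (y mod 12)^2) mod 24 = 18"
    using nat_less_12_cases[OF r] by auto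
  then show ?thesis using mult_sq_mod24_mod12[of 2 y] by simp
qed

lemma three_sq_neq: "N mod 24 \<in> {5, 7, 11, 19} \<Longrightarrow> 3 * (x::nat)^2 \<noteq> N"
  using three_sq_mod24[of x] by auto

lemma form_3_2_neq: "N mod 24 \<in> {7, 19} \<Longrightarrow> 3 * (x::nat)^2 + 2 * y^2 \<noteq> N"
proof
  assume N: "N mod 24 \<in> {7, 19}" and e: "3 * x^2 + 2 * y^2 = N"
  have "N mod 24 = ((3 * x^2) mod 24 + (2 * y^2) mod 24) mod 24" unfolding e[symmetric] by (simp add: mod_add_eq)
  then show False using N three_sq_mod24[of x] two_sq_mod24[of y] by auto
qed

lemma card_pos_form_solutions:
  assumes "\<And>x y. a * x^2 + b * y^2 = N \<Longrightarrow> x \<noteq> 0 \<and> y \<noteq> 0"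
  shows "card {(m, k). a * (Suc m)^2 + b * (Suc k)^2 = N} = card {(x, y). a * x^2 + b * (y::nat)^2 = N}"
proof -
  define f where "f = (\<lambda>(m::nat, k::nat). (Suc m, Suc k))"
  have inj: "inj f" unfolding f_def inj_def by auto
  have "f ` {(m, k). a * (Suc m)^2 + b * (Suc k)^2 = N} = {(x, y). a * x^2 + b * y^2 = N}"
  proof (intro equalityI subsetI)
    fix q assume "q \<in> f ` {(m, k). a * (Suc m)^2 + b * (Suc k)^2 = N}"
    then show "q \<in> {(x, y). a * x^2 + b * y^2 = N}" by (auto simp: f_def)
  next
    fix q assume "q \<in> {(x, y). a * x^2 + b * y^2 = N}"
    then obtain x y where q: "q = (x, y)" and e: "a * x^2 + b * y^2 = N" by auto
    then have "x \<noteq> 0" "y \<noteq> 0" using assms by auto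
    then obtain m k where "x = Suc m" "y = Suc k" by (metis not0_implies_Suc)
    then show "q \<in> f ` {(m, k). a * (Suc m)^2 + b * (Suc k)^2 = N}" using q e by (force simp: f_def)
  qed
  then show ?thesis using card_image[OF inj_on_subset[OF inj]] by (metis subset_UNIV)
qed

lemma sq_series_mult_rep:
  assumes "a \<ge> 1" "b \<ge> 1" and nonzero: "\<And>x y. a * x^2 + b * y^2 = N \<Longrightarrow> x \<noteq> 0 \<and> y \<noteq> 0"
  shows "(sq_series a * sq_series b) $ N = int (rep a b N)"
  using sq_series_mult_nth[OF assms(1,2)] card_pos_form_solutions[OF nonzero] by (simp add: rep_def)

lemma cong_drop_multiple: "[x = y + m * z] (mod n) \<Longrightarrow> m dvd n \<Longrightarrow> [x = y] (mod (m::int))"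
  by (meson cong_dvd_modulus cong_iff_lin cong_sym cong_trans)

lemma cong_neg4_of_mod2: "[a = b] (mod 2) \<Longrightarrow> [- 4 * a = 4 * b] (mod (8::int))"
  unfolding cong_iff_dvd_diff by presburger

lemma s_mod16_odd_residues:
  assumes N: "N mod 24 \<in> {5, 7, 11, 19}"
  shows "[s N = - 4 * (signed_sq_series 3 1 * signed_sq_series 2 (-1)) $ N
                + 8 * (signed_sq_series 3 1 * signed_sq_series 2 (-1) ^ 2) $ N] (mod 16)"
proof -
  have "odd N" using N by auto presburger+
  then have "[s N = 2 * signed_sq_series 3 1 $ N - 4 * (signed_sq_series 3 1 * signed_sq_series 2 (-1)) $ N
                + 8 * (signed_sq_series 3 1 * signed_sq_series 2 (-1) ^ 2) $ N] (mod 16)"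
    by (rule s_mod16_expansion)
  moreover have "signed_sq_series 3 1 $ N = 0"
    by (rule signed_sq_series_nth_0) (use three_sq_neq N in blast)
  ultimately show ?thesis by simp
qed

lemma s_rep_3_2:
  assumes N: "N mod 24 \<in> {5, 11}"
  shows "[s N = 4 * int (rep 3 2 N)] (mod 8)"
proof -
  define ZY where "ZY = signed_sq_series 3 1 * signed_sq_series 2 (-1)"
  have "[s N = - 4 * ZY $ N + 8 * (signed_sq_series 3 1 * signed_sq_series 2 (-1) ^ 2) $ N] (mod 16)"
    using s_mod16_odd_residues N unfolding ZY_def by auto
  then have s_ZY: "[s N = - 4 * ZY $ N] (mod 8)"
    by (rule cong_drop_multiple) simp
  have "fps_cong 2 ZY (sq_series 3 * sq_series 2)"
    unfolding ZY_def by (intro fps_cong_mult signed_sq_series_mod2) simp_all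
  moreover have "(sq_series 3 * sq_series 2) $ N = int (rep 3 2 N)"
  proof (rule sq_series_mult_rep)
    fix x y :: nat assume e: "3 * x^2 + 2 * y^2 = N"
    have "odd N" using N by auto presburger+
    then have "x \<noteq> 0" using e by (cases "x = 0") auto
    then show "x \<noteq> 0 \<and> y \<noteq> 0" using e three_sq_neq[of N x] N by auto
  qed simp_all
  ultimately have "[ZY $ N = int (rep 3 2 N)] (mod 2)" by (metis fps_cong_iff)
  then have "[- 4 * ZY $ N = 4 * int (rep 3 2 N)] (mod 8)"
    by (rule cong_neg4_of_mod2)
  with s_ZY show ?thesis by (rule cong_trans)
qed

lemma s_rep_3_4:
  assumes N: "N mod 24 \<in> {7, 19}"
  shows "[s N = 8 * int (rep 3 4 N)] (mod 16)"
proof -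
  define Z Y where "Z = signed_sq_series 3 1" and "Y = signed_sq_series 2 (-1)"
  have "(Z * Y) $ N = 0"
  proof -
    have "Z $ i * Y $ (N - i) = 0" if "i \<le> N" for i
    proof (rule ccontr)
      assume "Z $ i * Y $ (N - i) \<noteq> 0"
      then obtain m k where "3 * (Suc m)^2 = i" and "2 * (Suc k)^2 = N - i"
        unfolding Z_def Y_def using signed_sq_series_nth_0 by (metis mult_eq_0_iff)
      then have "3 * (Suc m)^2 + 2 * (Suc k)^2 = N" using that by simp
      then show False using form_3_2_neq[OF N] by blast
    qed
    then show ?thesis by (auto simp: fps_mult_nth intro!: sum.neutral)
  qed
  then have s_ZY: "[s N = 8 * (Z * Y ^ 2) $ N] (mod 16)"
    using s_mod16_odd_residues[of N] N unfolding Z_def Y_def by auto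
  have "fps_cong 2 (Z * Y ^ 2) (sq_series 3 * sq_series 2 ^ 2)"
    unfolding Z_def Y_def by (intro fps_cong_mult fps_cong_power signed_sq_series_mod2) simp_all
  also have "fps_cong 2 (sq_series 3 * sq_series 2 ^ 2) (sq_series 3 * sq_series 4)"
    using fps_cong_mult[OF fps_cong_refl sq_series_square_mod2[of 2]] by simp
  finally have "[(Z * Y ^ 2) $ N = (sq_series 3 * sq_series 4) $ N] (mod 2)" by (simp add: fps_cong_iff)
  also have "(sq_series 3 * sq_series 4) $ N = int (rep 3 4 N)"
  proof (rule sq_series_mult_rep)
    fix x y :: nat assume e: "3 * x^2 + 4 * y^2 = N"
    have "odd N" using N by auto presburger+
    then have "x \<noteq> 0" using e by (cases "x = 0") auto
    then show "x \<noteq> 0 \<and> y \<noteq> 0" using e three_sq_neq[of N x] N by auto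
  qed simp_all
  finally have "[8 * (Z * Y ^ 2) $ N = 8 * int (rep 3 4 N)] (mod 8 * 2)" by (rule cong_cmult_leftI)
  with s_ZY show ?thesis using cong_trans by fastforce
qed

lemma ell_mult_self_mod2: "k \<ge> 1 \<Longrightarrow> fps_cong 2 (ell k * ell k) (ell (2 * k))"
  using ell_square_mod2 by (simp add: power2_eq_square)

lemma psi_sq24_2_2_mod2: "fps_cong 2 (psi 1 * sq24 2 2) (ell 1 * ell 4)"
proof -
  have "fps_cong 2 (psi 1 * sq24 2 2) (ell 1 ^ 3 * ell 2)"
    by (intro fps_cong_mult psi_mod2_ell_cube fps_cong_sym[OF ell_mod2_sq24]) simp_all
  also have "ell 1 ^ 3 * ell 2 = ell 1 * (ell 1 * ell 1) * ell 2" by (simp add: power3_eq_cube mult_ac)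
  also have "fps_cong 2 (ell 1 * (ell 1 * ell 1) * ell 2) (ell 1 * ell 2 * ell 2)"
    using ell_mult_self_mod2[of 1] by (intro fps_cong_mult fps_cong_refl) simp_all
  also have "ell 1 * ell 2 * ell 2 = ell 1 * (ell 2 * ell 2)" by (simp add: mult_ac)
  also have "fps_cong 2 (ell 1 * (ell 2 * ell 2)) (ell 1 * ell 4)"
    using ell_mult_self_mod2[of 2] by (intro fps_cong_mult fps_cong_refl) simp_all
  finally show ?thesis .
qed

lemma ell_1_4_mod2: "fps_cong 2 (ell 1 * ell 4) (sq24 1 1 * sq24 4 4)"
  by (intro fps_cong_mult ell_mod2_sq24) simp_all

lemma psi_sq24_4_4_mod2: "fps_cong 2 (psi 1 * sq24 4 4) (ell 1 * psi 2)"
proof -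
  have "fps_cong 2 (psi 1 * sq24 4 4) (ell 1 ^ 3 * ell 4)"
    by (intro fps_cong_mult psi_mod2_ell_cube fps_cong_sym[OF ell_mod2_sq24]) simp_all
  also have "ell 1 ^ 3 * ell 4 = ell 1 * (ell 1 * ell 1) * ell 4" by (simp add: power3_eq_cube mult_ac)
  also have "fps_cong 2 (ell 1 * (ell 1 * ell 1) * ell 4) (ell 1 * ell 2 * ell 4)"
    using ell_mult_self_mod2[of 1] by (intro fps_cong_mult fps_cong_refl) simp_all
  finally have L: "fps_cong 2 (psi 1 * sq24 4 4) (ell 1 * ell 2 * ell 4)" .
  have "fps_cong 2 (ell 1 * psi 2) (ell 1 * ell 2 ^ 3)"
    by (intro fps_cong_mult fps_cong_refl psi_mod2_ell_cube) simp
  also have "ell 1 * ell 2 ^ 3 = ell 1 * ell 2 * (ell 2 * ell 2)" by (simp add: power3_eq_cube mult_ac)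
  also have "fps_cong 2 (ell 1 * ell 2 * (ell 2 * ell 2)) (ell 1 * ell 2 * ell 4)"
    using ell_mult_self_mod2[of 2] by (intro fps_cong_mult fps_cong_refl) simp_all
  finally have R: "fps_cong 2 (ell 1 * psi 2) (ell 1 * ell 2 * ell 4)" .
  show ?thesis using L fps_cong_sym[OF R] by (rule fps_cong_trans)
qed

lemma ell_1_psi_2_mod2: "fps_cong 2 (ell 1 * psi 2) (sq24 1 1 * sq24 6 6)"
  using fps_cong_mult[OF ell_mod2_sq24[of 1] fps_cong_refl[of 2 "psi 2"]] psi_eq_sq24[of 2] by simp

lemma psi_sq24_2_8_mod2: "fps_cong 2 (psi 1 * sq24 2 8) (ell 2 * psi 3)"
proof -
  define f where "f = theta 6 1 5 1"
  have f_sq24: "fps_cong 2 (sq24 2 8) f" using fps_cong_sym[OF theta_6_mod2_sq24[of 1]] by (simp add: f_def)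
  have f_eta: "fps_cong 2 (f * ell 2 * ell 3) (ell 6 * ell 1 * ell 6)" using theta_6_mod2_ell[of 1] by (simp add: f_def)
  have lhs: "fps_cong 2 (psi 1 * sq24 2 8) (ell 1 ^ 3 * f)" by (intro fps_cong_mult psi_mod2_ell_cube f_sq24) simp
  have rhs: "fps_cong 2 (ell 2 * psi 3) (ell 2 * ell 3 ^ 3)" by (intro fps_cong_mult fps_cong_refl psi_mod2_ell_cube) simp
  have "ell 1 ^ 3 * f * (ell 2 * ell 3) = ell 1 ^ 3 * (f * ell 2 * ell 3)" by (simp add: mult_ac)
  also have "fps_cong 2 (ell 1 ^ 3 * (f * ell 2 * ell 3)) (ell 1 ^ 3 * (ell 6 * ell 1 * ell 6))"
    by (intro fps_cong_mult fps_cong_refl f_eta)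
  also have "ell 1 ^ 3 * (ell 6 * ell 1 * ell 6) = ((ell 1 * ell 1) * (ell 1 * ell 1)) * (ell 6 * ell 6)"
    by (simp add: power3_eq_cube mult_ac)
  also have "fps_cong 2 (((ell 1 * ell 1) * (ell 1 * ell 1)) * (ell 6 * ell 6)) ((ell 2 * ell 2) * ell 12)"
    using ell_mult_self_mod2[of 1] ell_mult_self_mod2[of 6] by (intro fps_cong_mult) simp_all
  also have "fps_cong 2 ((ell 2 * ell 2) * ell 12) (ell 4 * ell 12)"
    using ell_mult_self_mod2[of 2] by (intro fps_cong_mult fps_cong_refl) simp_all
  finally have lhs_reduced: "fps_cong 2 (ell 1 ^ 3 * f * (ell 2 * ell 3)) (ell 4 * ell 12)" .
  have "ell 2 * ell 3 ^ 3 * (ell 2 * ell 3) = (ell 2 * ell 2) * ((ell 3 * ell 3) * (ell 3 * ell 3))"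
    by (simp add: power3_eq_cube mult_ac)
  also have "fps_cong 2 ((ell 2 * ell 2) * ((ell 3 * ell 3) * (ell 3 * ell 3))) (ell 4 * (ell 6 * ell 6))"
    using ell_mult_self_mod2[of 2] ell_mult_self_mod2[of 3] by (intro fps_cong_mult) simp_all
  also have "fps_cong 2 (ell 4 * (ell 6 * ell 6)) (ell 4 * ell 12)"
    using ell_mult_self_mod2[of 6] by (intro fps_cong_mult fps_cong_refl) simp_all
  finally have rhs_reduced: "fps_cong 2 (ell 2 * ell 3 ^ 3 * (ell 2 * ell 3)) (ell 4 * ell 12)" .
  have "fps_cong 2 (ell 1 ^ 3 * f * (ell 2 * ell 3)) (ell 2 * ell 3 ^ 3 * (ell 2 * ell 3))"
    using lhs_reduced fps_cong_sym[OF rhs_reduced] by (rule fps_cong_trans)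
  then have "fps_cong 2 (ell 1 ^ 3 * f) (ell 2 * ell 3 ^ 3)"
    by (rule fps_cong_cancel_unit) (simp add: ell_nth_0)
  then show ?thesis using lhs fps_cong_sym[OF rhs] by (meson fps_cong_trans)
qed

lemma ell_2_psi_3_mod2: "fps_cong 2 (ell 2 * psi 3) (sq24 2 2 * sq24 9 9)"
  using fps_cong_mult[OF ell_mod2_sq24[of 2] fps_cong_refl[of 2 "psi 3"]] psi_eq_sq24[of 3] by simp

lemma psi_sq24_4_16_mod2: "fps_cong 2 (psi 1 * sq24 4 16) (ell 1 * psi 6)"
proof -
  define f where "f = theta 12 2 10 1"
  have f_sq24: "fps_cong 2 (sq24 4 16) f" using fps_cong_sym[OF theta_6_mod2_sq24[of 2]] by (simp add: f_def)
  have f_eta: "fps_cong 2 (f * ell 4 * ell 6) (ell 12 * ell 2 * ell 12)" using theta_6_mod2_ell[of 2] by (simp add: f_def)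
  have lhs: "fps_cong 2 (psi 1 * sq24 4 16) (ell 1 ^ 3 * f)" by (intro fps_cong_mult psi_mod2_ell_cube f_sq24) simp
  have rhs: "fps_cong 2 (ell 1 * psi 6) (ell 1 * ell 6 ^ 3)" by (intro fps_cong_mult fps_cong_refl psi_mod2_ell_cube) simp
  have "ell 1 ^ 3 * f * (ell 4 * ell 6) = ell 1 ^ 3 * (f * ell 4 * ell 6)" by (simp add: mult_ac)
  also have "fps_cong 2 (ell 1 ^ 3 * (f * ell 4 * ell 6)) (ell 1 ^ 3 * (ell 12 * ell 2 * ell 12))"
    by (intro fps_cong_mult fps_cong_refl f_eta)
  also have "ell 1 ^ 3 * (ell 12 * ell 2 * ell 12) = ell 1 * (ell 1 * ell 1) * ell 2 * (ell 12 * ell 12)"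
    by (simp add: power3_eq_cube mult_ac)
  also have "fps_cong 2 (ell 1 * (ell 1 * ell 1) * ell 2 * (ell 12 * ell 12)) (ell 1 * ell 2 * ell 2 * ell 24)"
    using ell_mult_self_mod2[of 1] ell_mult_self_mod2[of 12] by (intro fps_cong_mult fps_cong_refl) simp_all
  also have "ell 1 * ell 2 * ell 2 * ell 24 = ell 1 * (ell 2 * ell 2) * ell 24" by (simp add: mult_ac)
  also have "fps_cong 2 (ell 1 * (ell 2 * ell 2) * ell 24) (ell 1 * ell 4 * ell 24)"
    using ell_mult_self_mod2[of 2] by (intro fps_cong_mult fps_cong_refl) simp_all
  finally have lhs_reduced: "fps_cong 2 (ell 1 ^ 3 * f * (ell 4 * ell 6)) (ell 1 * ell 4 * ell 24)" .
  have "ell 1 * ell 6 ^ 3 * (ell 4 * ell 6) = ell 1 * ell 4 * ((ell 6 * ell 6) * (ell 6 * ell 6))"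
    by (simp add: power3_eq_cube mult_ac)
  also have "fps_cong 2 (ell 1 * ell 4 * ((ell 6 * ell 6) * (ell 6 * ell 6))) (ell 1 * ell 4 * (ell 12 * ell 12))"
    using ell_mult_self_mod2[of 6] by (intro fps_cong_mult fps_cong_refl) simp_all
  also have "fps_cong 2 (ell 1 * ell 4 * (ell 12 * ell 12)) (ell 1 * ell 4 * ell 24)"
    using ell_mult_self_mod2[of 12] by (intro fps_cong_mult fps_cong_refl) simp_all
  finally have rhs_reduced: "fps_cong 2 (ell 1 * ell 6 ^ 3 * (ell 4 * ell 6)) (ell 1 * ell 4 * ell 24)" .
  have "fps_cong 2 (ell 1 ^ 3 * f * (ell 4 * ell 6)) (ell 1 * ell 6 ^ 3 * (ell 4 * ell 6))"
    using lhs_reduced fps_cong_sym[OF rhs_reduced] by (rule fps_cong_trans)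
  then have "fps_cong 2 (ell 1 ^ 3 * f) (ell 1 * ell 6 ^ 3)"
    by (rule fps_cong_cancel_unit) (simp add: ell_nth_0)
  then show ?thesis using lhs fps_cong_sym[OF rhs] by (meson fps_cong_trans)
qed

lemma ell_1_psi_6_mod2: "fps_cong 2 (ell 1 * psi 6) (sq24 1 1 * sq24 18 18)"
  using fps_cong_mult[OF ell_mod2_sq24[of 1] fps_cong_refl[of 2 "psi 6"]] psi_eq_sq24[of 6] by simp

lemma sq24_mult_rep:
  assumes "a \<ge> 1" "b \<ge> 1" "d < 24"
    and "\<And>u v. u < 12 \<Longrightarrow> v < 12 \<Longrightarrow> (a * u^2 + b * v^2) mod 24 = (c + d) mod 24 \<Longrightarrow> (a * u^2) mod 24 = c"
  shows "(sq24 a c * sq24 b d) $ n = int (rep a b (24 * n + (c + d)))"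
  using sq24_mult_nth[OF assms(1,2), of c d n] sq24_split_residues[of a b c d n, OF assms(4,3)]
  by (simp add: rep_def)

lemma fps_cong_rep:
  assumes "fps_cong 2 F G"
    and "\<And>n. F $ n = int (rep a b (24 * n + r))" "\<And>n. G $ n = int (rep a' b' (24 * n + r))"
    and "N mod 24 = r"
  shows "[int (rep a b N) = int (rep a' b' N)] (mod 2)"
proof -
  have "N = 24 * (N div 24) + r" using assms(4) by (metis div_mult_mod_eq mult.commute)
  then show ?thesis using assms(1-3) by (metis fps_cong_iff)
qed

lemma s_rep_1_4:
  assumes "N mod 24 = 5"
  shows "[s N = 4 * int (rep 1 4 N)] (mod 8)"
proof -
  have "[int (rep 3 2 N) = int (rep 1 4 N)] (mod 2)"
  proof (rule fps_cong_rep[OF _ _ _ assms])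
    show "fps_cong 2 (sq24 3 3 * sq24 2 2) (sq24 1 1 * sq24 4 4)"
      using fps_cong_trans[OF psi_sq24_2_2_mod2 ell_1_4_mod2] psi_eq_sq24[of 1] by simp
    show "(sq24 3 3 * sq24 2 2) $ n = int (rep 3 2 (24 * n + 5))" for n
      using sq24_mult_rep[of 3 2 2 3, OF _ _ _ residues_3_2_5] by simp
    show "(sq24 1 1 * sq24 4 4) $ n = int (rep 1 4 (24 * n + 5))" for n
      using sq24_mult_rep[of 1 4 4 1, OF _ _ _ residues_1_4_5] by simp
  qed
  from cong_cmult_leftI[OF this, of 4]
  have "[4 * int (rep 3 2 N) = 4 * int (rep 1 4 N)] (mod 8)" by simp
  moreover have "[s N = 4 * int (rep 3 2 N)] (mod 8)" using s_rep_3_2 assms by simp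
  ultimately show ?thesis using cong_trans by blast
qed

lemma s_rep_2_9:
  assumes "N mod 24 = 11"
  shows "[s N = 4 * int (rep 2 9 N)] (mod 8)"
proof -
  have "[int (rep 3 2 N) = int (rep 2 9 N)] (mod 2)"
  proof (rule fps_cong_rep[OF _ _ _ assms])
    show "fps_cong 2 (sq24 3 3 * sq24 2 8) (sq24 2 2 * sq24 9 9)"
      using fps_cong_trans[OF psi_sq24_2_8_mod2 ell_2_psi_3_mod2] psi_eq_sq24[of 1] by simp
    show "(sq24 3 3 * sq24 2 8) $ n = int (rep 3 2 (24 * n + 11))" for n
      using sq24_mult_rep[of 3 2 8 3, OF _ _ _ residues_3_2_11] by simp
    show "(sq24 2 2 * sq24 9 9) $ n = int (rep 2 9 (24 * n + 11))" for n
      using sq24_mult_rep[of 2 9 9 2, OF _ _ _ residues_2_9_11] by simp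
  qed
  from cong_cmult_leftI[OF this, of 4]
  have "[4 * int (rep 3 2 N) = 4 * int (rep 2 9 N)] (mod 8)" by simp
  moreover have "[s N = 4 * int (rep 3 2 N)] (mod 8)" using s_rep_3_2 assms by simp
  ultimately show ?thesis using cong_trans by blast
qed

lemma s_rep_1_6:
  assumes "N mod 24 = 7"
  shows "[s N = 8 * int (rep 1 6 N)] (mod 16)"
proof -
  have "[int (rep 3 4 N) = int (rep 1 6 N)] (mod 2)"
  proof (rule fps_cong_rep[OF _ _ _ assms])
    show "fps_cong 2 (sq24 3 3 * sq24 4 4) (sq24 1 1 * sq24 6 6)"
      using fps_cong_trans[OF psi_sq24_4_4_mod2 ell_1_psi_2_mod2] psi_eq_sq24[of 1] by simp
    show "(sq24 3 3 * sq24 4 4) $ n = int (rep 3 4 (24 * n + 7))" for n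
      using sq24_mult_rep[of 3 4 4 3, OF _ _ _ residues_3_4_7] by simp
    show "(sq24 1 1 * sq24 6 6) $ n = int (rep 1 6 (24 * n + 7))" for n
      using sq24_mult_rep[of 1 6 6 1, OF _ _ _ residues_1_6_7] by simp
  qed
  from cong_cmult_leftI[OF this, of 8]
  have "[8 * int (rep 3 4 N) = 8 * int (rep 1 6 N)] (mod 16)" by simp
  moreover have "[s N = 8 * int (rep 3 4 N)] (mod 16)" using s_rep_3_4 assms by simp
  ultimately show ?thesis using cong_trans by blast
qed

lemma s_rep_1_18:
  assumes "N mod 24 = 19"
  shows "[s N = 8 * int (rep 1 18 N)] (mod 16)"
proof -
  have "[int (rep 3 4 N) = int (rep 1 18 N)] (mod 2)"
  proof (rule fps_cong_rep[OF _ _ _ assms])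
    show "fps_cong 2 (sq24 3 3 * sq24 4 16) (sq24 1 1 * sq24 18 18)"
      using fps_cong_trans[OF psi_sq24_4_16_mod2 ell_1_psi_6_mod2] psi_eq_sq24[of 1] by simp
    show "(sq24 3 3 * sq24 4 16) $ n = int (rep 3 4 (24 * n + 19))" for n
      using sq24_mult_rep[of 3 4 16 3, OF _ _ _ residues_3_4_19] by simp
    show "(sq24 1 1 * sq24 18 18) $ n = int (rep 1 18 (24 * n + 19))" for n
      using sq24_mult_rep[of 1 18 18 1, OF _ _ _ residues_1_18_19] by simp
  qed
  from cong_cmult_leftI[OF this, of 8]
  have "[8 * int (rep 3 4 N) = 8 * int (rep 1 18 N)] (mod 16)" by simp
  moreover have "[s N = 8 * int (rep 3 4 N)] (mod 16)" using s_rep_3_4 assms by simp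
  ultimately show ?thesis using cong_trans by blast
qed

lemma fps_cong_mult_rep:
  assumes "fps_cong 2 F G" "G $ n = int (rep a b N)"
  shows "[(fps_const k * F) $ n = k * int (rep a b N)] (mod k * 2)"
proof -
  have "[F $ n = G $ n] (mod 2)" using assms(1) by (simp add: fps_cong_iff)
  then show ?thesis
    using assms(2) cong_cmult_leftI[of "F $ n" "G $ n" 2 k] by (simp add: fps_mult_left_const_nth)
qed

lemma ell_1_4_rep: "[(4 * ell 1 * ell 4) $ n = 4 * int (rep 1 4 (24 * n + 5))] (mod 8)"
  using fps_cong_mult_rep[OF ell_1_4_mod2, of n 1 4 "24 * n + 5" 4]
    sq24_mult_rep[of 1 4 4 1, OF _ _ _ residues_1_4_5]
  by (simp add: numeral_fps_const mult.assoc)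

lemma ell_2_psi_3_rep: "[(4 * ell 2 * psi 3) $ n = 4 * int (rep 2 9 (24 * n + 11))] (mod 8)"
  using fps_cong_mult_rep[OF ell_2_psi_3_mod2, of n 2 9 "24 * n + 11" 4]
    sq24_mult_rep[of 2 9 9 2, OF _ _ _ residues_2_9_11]
  by (simp add: numeral_fps_const mult.assoc)

lemma ell_1_psi_2_rep: "[(8 * ell 1 * psi 2) $ n = 8 * int (rep 1 6 (24 * n + 7))] (mod 16)"
  using fps_cong_mult_rep[OF ell_1_psi_2_mod2, of n 1 6 "24 * n + 7" 8]
    sq24_mult_rep[of 1 6 6 1, OF _ _ _ residues_1_6_7]
  by (simp add: numeral_fps_const mult.assoc)

lemma ell_1_psi_6_rep: "[(8 * ell 1 * psi 6) $ n = 8 * int (rep 1 18 (24 * n + 19))] (mod 16)"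
  using fps_cong_mult_rep[OF ell_1_psi_6_mod2, of n 1 18 "24 * n + 19" 8]
    sq24_mult_rep[of 1 18 18 1, OF _ _ _ residues_1_18_19]
  by (simp add: numeral_fps_const mult.assoc)

lemma prime_even_power_mod24:
  assumes "prime (p::nat)" "p \<ge> 5"
  shows "(p ^ (2 * k)) mod 24 = 1"
  using prime_sq_mod24[OF assms] by (simp add: power_mult power_mod[of "p^2", symmetric])

lemma prime_even_power_mult_mod24:
  assumes "prime (p::nat)" "p \<ge> 5" "r < 24"
  shows "(p ^ (2 * k) * (24 * n + r)) mod 24 = r"
  using prime_even_power_mod24[OF assms(1,2), of k] assms(3) by (simp add: mod_mult_eq[symmetric])

lemma prime_not_dvd_24_mult:
  assumes "prime (p::nat)" "p \<ge> 5" "1 \<le> j" "j \<le> p - 1"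
  shows "\<not> p dvd 24 * j"
proof
  assume "p dvd 24 * j"
  moreover have "\<not> p dvd j" using assms(3,4) by (auto dest: dvd_imp_le)
  ultimately have "p dvd 24" using assms(1) by (simp add: prime_dvd_mult_iff)
  then have "p dvd 2 ^ 3 \<or> p dvd 3" using prime_dvd_mult_iff[OF assms(1), of "2 ^ 3" 3] by simp
  then have "p dvd 2 \<or> p dvd 3" using prime_dvd_power[OF assms(1)] by blast
  then show False using prime_ge5_not_dvd_2_3[OF assms(1,2)] by blast
qed

lemma s_congruences_of_rep:
  fixes P :: "nat \<Rightarrow> bool"
  assumes s_rep: "\<And>N. N mod 24 = r \<Longrightarrow> [s N = c * int (rep a b N)] (mod m)"
    and T_rep: "\<And>n. [T $ n = c * int (rep a b (24 * n + r))] (mod m)"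
    and form: "\<And>p x y. prime p \<Longrightarrow> p \<ge> 5 \<Longrightarrow> P p \<Longrightarrow> p dvd a * x^2 + b * y^2 \<Longrightarrow> p dvd x \<and> p dvd y"
    and r: "r < 24"
  shows "\<forall>p j. prime p \<and> p \<ge> 5 \<and> P p \<and> 1 \<le> j \<and> j \<le> p - 1 \<longrightarrow>
      [s (24 * p^(2*\<alpha>) * n + r * p^(2*\<alpha>)) = T $ n] (mod m) \<and>
      [s (24 * p^(2*\<alpha>+2) * n + 24 * p^(2*\<alpha>+1) * j + r * p^(2*\<alpha>+2)) = 0] (mod m)"
proof (intro allI impI conjI; elim conjE)
  fix p j assume p: "prime p" "p \<ge> 5" "P p" and j: "1 \<le> j" "j \<le> p - 1"
  have p0: "p > 0" using p(1) prime_gt_0_nat by blast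
  note form_p = form[OF p]
  have rep_pow: "rep a b (p ^ (2 * k) * M) = rep a b M" for k M
    by (rule rep_prime_pow_mult[OF p0 form_p])
  have "24 * p^(2*\<alpha>) * n + r * p^(2*\<alpha>) = p^(2*\<alpha>) * (24 * n + r)"
    by (simp add: algebra_simps)
  moreover have "[s (p^(2*\<alpha>) * (24 * n + r)) = c * int (rep a b (24 * n + r))] (mod m)"
    using s_rep[OF prime_even_power_mult_mod24[OF p(1,2) r]] by (simp add: rep_pow)
  ultimately show "[s (24 * p^(2*\<alpha>) * n + r * p^(2*\<alpha>)) = T $ n] (mod m)"
    using T_rep by (metis cong_sym cong_trans)
  define M where "M = 24 * p * n + 24 * j + r * p"
  define N where "N = 24 * p^(2*\<alpha>+2) * n + 24 * p^(2*\<alpha>+1) * j + r * p^(2*\<alpha>+2)"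
  have "N = p^(2*(\<alpha>+1)) * (24 * n + r) + 24 * (p^(2*\<alpha>+1) * j)"
    by (simp add: N_def algebra_simps)
  then have "N mod 24 = (p^(2*(\<alpha>+1)) * (24 * n + r)) mod 24"
    by (simp only: mod_mult_self2)
  also have "\<dots> = r" by (rule prime_even_power_mult_mod24[OF p(1,2) r])
  finally have N_mod: "N mod 24 = r" .
  have "\<not> p dvd M"
    using prime_not_dvd_24_mult[OF p(1,2) j] by (simp add: M_def dvd_add_right_iff)
  then have "rep a b (p * M) = 0"
    using rep_prime_mult_eq_0[OF p0 form_p] by blast
  moreover have "N = p^(2*\<alpha>) * (p * M)" by (simp add: N_def M_def power_add algebra_simps)
  ultimately show "[s N = 0] (mod m)" using s_rep[OF N_mod] by (simp add: rep_pow)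
qed

theorem theorem9:
  fixes \<alpha> n :: nat
  shows
   "(\<forall>p j. prime p \<and> p \<ge> 5 \<and> Legendre (-1) (int p) = -1 \<and> 1 \<le> j \<and> j \<le> p - 1 \<longrightarrow>
      [s (24 * p^(2*\<alpha>) * n + 5 * p^(2*\<alpha>)) = fps_nth (4 * ell 1 * ell 4) n] (mod 8) \<and>
      [s (24 * p^(2*\<alpha>+2) * n + 24 * p^(2*\<alpha>+1) * j + 5 * p^(2*\<alpha>+2)) = 0] (mod 8)) \<and>
    (\<forall>p j. prime p \<and> p \<ge> 5 \<and> Legendre (-2) (int p) = -1 \<and> 1 \<le> j \<and> j \<le> p - 1 \<longrightarrow>
      [s (24 * p^(2*\<alpha>) * n + 11 * p^(2*\<alpha>)) = fps_nth (4 * ell 2 * psi 3) n] (mod 8) \<and>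
      [s (24 * p^(2*\<alpha>+2) * n + 24 * p^(2*\<alpha>+1) * j + 11 * p^(2*\<alpha>+2)) = 0] (mod 8)) \<and>
    (\<forall>p j. prime p \<and> p \<ge> 5 \<and> Legendre (-6) (int p) = -1 \<and> 1 \<le> j \<and> j \<le> p - 1 \<longrightarrow>
      [s (24 * p^(2*\<alpha>) * n + 7 * p^(2*\<alpha>)) = fps_nth (8 * ell 1 * psi 2) n] (mod 16) \<and>
      [s (24 * p^(2*\<alpha>+2) * n + 24 * p^(2*\<alpha>+1) * j + 7 * p^(2*\<alpha>+2)) = 0] (mod 16)) \<and>
    (\<forall>p j. prime p \<and> p \<ge> 5 \<and> Legendre (-18) (int p) = -1 \<and> 1 \<le> j \<and> j \<le> p - 1 \<longrightarrow>
      [s (24 * p^(2*\<alpha>) * n + 19 * p^(2*\<alpha>)) = fps_nth (8 * ell 1 * psi 6) n] (mod 16) \<and>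
      [s (24 * p^(2*\<alpha>+2) * n + 24 * p^(2*\<alpha>+1) * j + 19 * p^(2*\<alpha>+2)) = 0] (mod 16))"

proof -
  have "\<forall>p j. prime p \<and> p \<ge> 5 \<and> Legendre (-1) (int p) = -1 \<and> 1 \<le> j \<and> j \<le> p - 1 \<longrightarrow>
      [s (24 * p^(2*\<alpha>) * n + 5 * p^(2*\<alpha>)) = (4 * ell 1 * ell 4) $ n] (mod 8) \<and>
      [s (24 * p^(2*\<alpha>+2) * n + 24 * p^(2*\<alpha>+1) * j + 5 * p^(2*\<alpha>+2)) = 0] (mod 8)"
    by (rule s_congruences_of_rep[OF s_rep_1_4 ell_1_4_rep form_1_4_prime_dvd]) simp_all
  moreover have "\<forall>p j. prime p \<and> p \<ge> 5 \<and> Legendre (-2) (int p) = -1 \<and> 1 \<le> j \<and> j \<le> p - 1 \<longrightarrow>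
      [s (24 * p^(2*\<alpha>) * n + 11 * p^(2*\<alpha>)) = (4 * ell 2 * psi 3) $ n] (mod 8) \<and>
      [s (24 * p^(2*\<alpha>+2) * n + 24 * p^(2*\<alpha>+1) * j + 11 * p^(2*\<alpha>+2)) = 0] (mod 8)"
    by (rule s_congruences_of_rep[OF s_rep_2_9 ell_2_psi_3_rep form_2_9_prime_dvd]) simp_all
  moreover have "\<forall>p j. prime p \<and> p \<ge> 5 \<and> Legendre (-6) (int p) = -1 \<and> 1 \<le> j \<and> j \<le> p - 1 \<longrightarrow>
      [s (24 * p^(2*\<alpha>) * n + 7 * p^(2*\<alpha>)) = (8 * ell 1 * psi 2) $ n] (mod 16) \<and>
      [s (24 * p^(2*\<alpha>+2) * n + 24 * p^(2*\<alpha>+1) * j + 7 * p^(2*\<alpha>+2)) = 0] (mod 16)"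
    by (rule s_congruences_of_rep[OF s_rep_1_6 ell_1_psi_2_rep form_1_6_prime_dvd]) simp_all
  moreover have "\<forall>p j. prime p \<and> p \<ge> 5 \<and> Legendre (-18) (int p) = -1 \<and> 1 \<le> j \<and> j \<le> p - 1 \<longrightarrow>
      [s (24 * p^(2*\<alpha>) * n + 19 * p^(2*\<alpha>)) = (8 * ell 1 * psi 6) $ n] (mod 16) \<and>
      [s (24 * p^(2*\<alpha>+2) * n + 24 * p^(2*\<alpha>+1) * j + 19 * p^(2*\<alpha>+2)) = 0] (mod 16)"
    by (rule s_congruences_of_rep[OF s_rep_1_18 ell_1_psi_6_rep form_1_18_prime_dvd]) simp_all
  ultimately show ?thesis by blast
qed

end
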